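(* Let $A(z)$ be an $n\times n$ Hermite matrix of Laurent polynomials such that $\det A(z)$ is a nonzero monomial (i.e. $\det A(z)=cz^k$ with $c\ne0$, $k\in\mathbb{Z}$). Then there exist nonnegative integers $\nu_+,\nu_-$ with $\nu_++\nu_-=n$ and an $n\times n$ matrix $U(z)$ of Laurent polynomials such that $A(z)=U(z)\operatorname{diag}(I_{\nu_+},-I_{\nu_-})U^\star(z)$.
   Context: For a matrix $U(z)=\sum_k U_k z^k$ of Laurent polynomials, $U^\star(z):=\sum_k\overline{U_k}^T z^{-k}$; $A$ is a Hermite matrix of Laurent polynomials if $A^\star=A$. *)

theory Defs
  imports "HOL-Computational_Algebra.Formal_Laurent_Series" "Jordan_Normal_Form.Determinant"
begin

definition is_laurent_poly :: "complex fls \<Rightarrow> bool" where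
  "is_laurent_poly f \<longleftrightarrow> finite {k. fls_nth f k \<noteq> 0}"

definition fls_star :: "complex fls \<Rightarrow> complex fls" where
  "fls_star f = Abs_fls (\<lambda>k. cnj (fls_nth f (- k)))"

definition laurent_poly_mat :: "complex fls mat \<Rightarrow> bool" where
  "laurent_poly_mat U \<longleftrightarrow>
     (\<forall>i < dim_row U. \<forall>j < dim_col U. is_laurent_poly (U $$ (i, j)))"

definition mat_star :: "complex fls mat \<Rightarrow> complex fls mat" where
  "mat_star U = mat (dim_col U) (dim_row U) (\<lambda>(i, j). fls_star (U $$ (j, i)))"

definition hermite_lp_mat :: "complex fls mat \<Rightarrow> bool" where
  "hermite_lp_mat A \<longleftrightarrow> laurent_poly_mat A \<and> mat_star A = A"

definition signature_mat :: "nat \<Rightarrow> nat \<Rightarrow> complex fls mat" where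
  "signature_mat p m = mat (p + m) (p + m)
     (\<lambda>(i, j). if i = j then (if i < p then 1 else - 1) else 0)"

end

theory Submission
  imports Defs
begin

text \<open>A Hermitian Laurent matrix \<open>H\<close> with constant determinant \<open>c \<noteq> 0\<close> is transformed by
  congruences \<open>H \<mapsto> W H W\<^sup>\<star>\<close> with \<open>W\<close> invertible over the Laurent polynomials. Bound the
  degrees in row \<open>i\<close> by \<open>\<tau>\<^sub>i\<close>. The coefficients of \<open>z^\<tau>\<^sub>i\<close> in the rows form a constant matrix
  whose determinant is the coefficient of \<open>z^(\<Sigma> \<tau>)\<close> in \<open>det H = c\<close>; so while \<open>\<Sigma> \<tau> > 0\<close> it is
  singular, and a row operation built from a kernel vector lowers some \<open>\<tau>\<^sub>k\<close>. Once \<open>\<Sigma> \<tau> = 0\<close>,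
  a nonzero term of that determinant and the symmetry \<open>H\<^sub>a\<^sub>b = H\<^sub>b\<^sub>a\<^sup>\<star>\<close> force the entries it
  selects to be monomials. This gives a nonzero real constant on the diagonal, directly or after
  two more row operations; that pivot splits off a \<open>1 \<times> 1\<close> block \<open>\<plusminus>1\<close>, and induction on
  the size finishes. Finally \<open>det A = c z^k\<close> is itself Hermitian, which forces \<open>k = 0\<close>.\<close>

lemma fls_times_nth_eq_sum:
  fixes f g :: "'a::comm_ring_1 fls"
  assumes S: "finite S"
    and sub: "\<And>i. fls_nth f i \<noteq> 0 \<Longrightarrow> fls_nth g (n - i) \<noteq> 0 \<Longrightarrow> i \<in> S"
  shows "fls_nth (f * g) n = (\<Sum>i\<in>S. fls_nth f i * fls_nth g (n - i))"
proof -
  let ?h = "\<lambda>i. fls_nth f i * fls_nth g (n - i)"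
  let ?Z = "{i. ?h i \<noteq> 0}"
  have Z1: "?Z \<subseteq> {fls_subdegree f..n - fls_subdegree g}"
  proof
    fix i assume "i \<in> ?Z"
    then have "fls_nth f i \<noteq> 0" "fls_nth g (n - i) \<noteq> 0" by auto
    from this[THEN fls_subdegree_leI] show "i \<in> {fls_subdegree f..n - fls_subdegree g}" by auto
  qed
  have Z2: "?Z \<subseteq> S" by (auto intro: sub)
  have "fls_nth (f * g) n = (\<Sum>i=fls_subdegree f..n - fls_subdegree g. ?h i)"
    by (rule fls_times_nth(2))
  also have "\<dots> = (\<Sum>i\<in>?Z. ?h i)"
    by (rule sum.mono_neutral_right[OF _ Z1]) simp_all
  also have "\<dots> = (\<Sum>i\<in>S. ?h i)"
    by (rule sum.mono_neutral_left[OF S Z2]) simp_all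
  finally show ?thesis .
qed

lemma fls_nth_const_X_intpow [simp]:
  "fls_nth (fls_const (c :: 'a::comm_ring_1) * fls_X_intpow t) e = (if e = t then c else 0)"
  by (simp add: mult.commute[of "fls_const c"] fls_X_intpow_times_conv_shift)

lemma fls_eq_monomial:
  fixes f :: "'a::comm_ring_1 fls"
  assumes "\<And>e. e \<noteq> t \<Longrightarrow> fls_nth f e = 0"
  shows "f = fls_const (fls_nth f t) * fls_X_intpow t"
proof (rule fls_eqI)
  fix e show "fls_nth f e = fls_nth (fls_const (fls_nth f t) * fls_X_intpow t) e"
    by (cases "e = t") (simp_all add: assms)
qed

lemma is_laurent_poly_iff_bounded:
  "is_laurent_poly f \<longleftrightarrow> (\<exists>N::int. \<forall>k. N < \<bar>k\<bar> \<longrightarrow> fls_nth f k = 0)"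
proof
  assume "is_laurent_poly f"
  then have fin: "finite {k. fls_nth f k \<noteq> 0}" unfolding is_laurent_poly_def .
  define N where "N = (\<Sum>k\<in>{k. fls_nth f k \<noteq> 0}. \<bar>k\<bar>)"
  have "\<bar>k\<bar> \<le> N" if "fls_nth f k \<noteq> 0" for k
    unfolding N_def using member_le_sum[of k "{k. fls_nth f k \<noteq> 0}" abs] fin that by auto
  then show "\<exists>N::int. \<forall>k. N < \<bar>k\<bar> \<longrightarrow> fls_nth f k = 0" by (meson not_le)
next
  assume "\<exists>N::int. \<forall>k. N < \<bar>k\<bar> \<longrightarrow> fls_nth f k = 0"
  then obtain N :: int where "\<forall>k. N < \<bar>k\<bar> \<longrightarrow> fls_nth f k = 0" by blast
  then have "{k. fls_nth f k \<noteq> 0} \<subseteq> {-N..N}" by force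
  then show "is_laurent_poly f" unfolding is_laurent_poly_def by (rule finite_subset) simp
qed

lemma is_laurent_polyE:
  assumes "is_laurent_poly f"
  obtains N where "N \<ge> 0" "\<And>k. N < \<bar>k\<bar> \<Longrightarrow> fls_nth f k = 0"
proof -
  from assms obtain N :: int where "\<forall>k. N < \<bar>k\<bar> \<longrightarrow> fls_nth f k = 0"
    unfolding is_laurent_poly_iff_bounded by blast
  then show ?thesis by (intro that[of "max N 0"]) auto
qed

lemma is_laurent_polyI: "(\<And>k. N < \<bar>k\<bar> \<Longrightarrow> fls_nth f k = 0) \<Longrightarrow> is_laurent_poly f"
  unfolding is_laurent_poly_iff_bounded by blast

lemma is_laurent_poly_0 [simp]: "is_laurent_poly 0"
  and is_laurent_poly_1 [simp]: "is_laurent_poly 1"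
  and is_laurent_poly_const [simp]: "is_laurent_poly (fls_const c)"
  by (rule is_laurent_polyI[of 0], simp)+

lemma is_laurent_poly_X_intpow [simp]: "is_laurent_poly (fls_X_intpow i)"
  by (rule is_laurent_polyI[of "\<bar>i\<bar>"]) auto

lemma is_laurent_poly_shift [simp]:
  assumes "is_laurent_poly f" shows "is_laurent_poly (fls_shift k f)"
proof -
  obtain N where N: "\<And>j. N < \<bar>j\<bar> \<Longrightarrow> fls_nth f j = 0" using is_laurent_polyE[OF assms] by blast
  show ?thesis by (rule is_laurent_polyI[of "N + \<bar>k\<bar>"]) (simp add: N)
qed

lemma is_laurent_poly_add [simp]:
  assumes "is_laurent_poly f" "is_laurent_poly g" shows "is_laurent_poly (f + g)"
proof -
  obtain N where N: "\<And>k. N < \<bar>k\<bar> \<Longrightarrow> fls_nth f k = 0" using is_laurent_polyE[OF assms(1)] by blast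
  obtain M where M: "\<And>k. M < \<bar>k\<bar> \<Longrightarrow> fls_nth g k = 0" using is_laurent_polyE[OF assms(2)] by blast
  show ?thesis by (rule is_laurent_polyI[of "max N M"]) (simp add: N M)
qed

lemma is_laurent_poly_uminus [simp]:
  assumes "is_laurent_poly f" shows "is_laurent_poly (- f)"
proof -
  obtain N where N: "\<And>k. N < \<bar>k\<bar> \<Longrightarrow> fls_nth f k = 0" using is_laurent_polyE[OF assms] by blast
  show ?thesis by (rule is_laurent_polyI[of N]) (simp add: N)
qed

lemma is_laurent_poly_mult [simp]:
  assumes "is_laurent_poly f" "is_laurent_poly g" shows "is_laurent_poly (f * g)"
proof -
  obtain N where N: "\<And>k. N < \<bar>k\<bar> \<Longrightarrow> fls_nth f k = 0" using is_laurent_polyE[OF assms(1)] by blast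
  obtain M where M: "\<And>k. M < \<bar>k\<bar> \<Longrightarrow> fls_nth g k = 0" using is_laurent_polyE[OF assms(2)] by blast
  show ?thesis
  proof (rule is_laurent_polyI[of "N + M"])
    fix k :: int assume k: "N + M < \<bar>k\<bar>"
    have "fls_nth (f * g) k = (\<Sum>i\<in>{}. fls_nth f i * fls_nth g (k - i))"
    proof (rule fls_times_nth_eq_sum)
      fix i assume "fls_nth f i \<noteq> 0" "fls_nth g (k - i) \<noteq> 0"
      then have "\<bar>i\<bar> \<le> N" "\<bar>k - i\<bar> \<le> M" using N M by force+
      with k show "i \<in> {}" by auto
    qed simp
    then show "fls_nth (f * g) k = 0" by simp
  qed
qed

lemma is_laurent_poly_sum [simp]:
  "(\<And>x. x \<in> A \<Longrightarrow> is_laurent_poly (f x)) \<Longrightarrow> is_laurent_poly (\<Sum>x\<in>A. f x)"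
  by (induction A rule: infinite_finite_induct) auto

lemma is_laurent_poly_prod [simp]:
  "(\<And>x. x \<in> A \<Longrightarrow> is_laurent_poly (f x)) \<Longrightarrow> is_laurent_poly (\<Prod>x\<in>A. f x)"
  by (induction A rule: infinite_finite_induct) auto

lemma is_laurent_poly_of_int [simp]: "is_laurent_poly (of_int z)"
  by (metis fls_of_int is_laurent_poly_const)

lemma fls_star_nth:
  assumes "is_laurent_poly f" shows "fls_nth (fls_star f) k = cnj (fls_nth f (- k))"
proof -
  obtain N where N: "\<And>k. N < \<bar>k\<bar> \<Longrightarrow> fls_nth f k = 0" using is_laurent_polyE[OF assms] by blast
  then have "\<forall>n < - N. cnj (fls_nth f (- n)) = 0" by auto
  then show ?thesis unfolding fls_star_def by (subst nth_Abs_fls_lower_bound) auto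
qed

lemma is_laurent_poly_fls_star [simp]:
  assumes "is_laurent_poly f" shows "is_laurent_poly (fls_star f)"
proof -
  obtain N where N: "\<And>k. N < \<bar>k\<bar> \<Longrightarrow> fls_nth f k = 0" using is_laurent_polyE[OF assms] by blast
  show ?thesis by (rule is_laurent_polyI[of N]) (simp add: fls_star_nth[OF assms] N)
qed

lemma fls_star_fls_star [simp]: "is_laurent_poly f \<Longrightarrow> fls_star (fls_star f) = f"
  by (rule fls_eqI) (simp add: fls_star_nth)

lemma fls_star_add:
  "is_laurent_poly f \<Longrightarrow> is_laurent_poly g \<Longrightarrow> fls_star (f + g) = fls_star f + fls_star g"
  by (rule fls_eqI) (simp add: fls_star_nth)

lemma fls_star_uminus: "is_laurent_poly f \<Longrightarrow> fls_star (- f) = - fls_star f"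
  by (rule fls_eqI) (simp add: fls_star_nth)

lemma fls_star_const [simp]: "fls_star (fls_const c) = fls_const (cnj c)"
  by (rule fls_eqI) (simp add: fls_star_nth)

lemma fls_star_0 [simp]: "fls_star 0 = 0"
  and fls_star_1 [simp]: "fls_star 1 = 1"
  using fls_star_const[of 0] fls_star_const[of 1] by simp_all

lemma fls_star_X_intpow [simp]: "fls_star (fls_X_intpow i) = fls_X_intpow (- i)"
  by (rule fls_eqI) (auto simp add: fls_star_nth)

lemma fls_star_shift_1 [simp]: "fls_star (fls_shift m 1) = fls_shift (- m) 1"
  using fls_star_X_intpow[of "- m"] by simp

lemma fls_star_of_int [simp]: "fls_star (of_int z) = of_int z"
  by (metis fls_of_int fls_star_const complex_cnj_of_int)

lemma fls_star_mult:
  assumes f: "is_laurent_poly f" and g: "is_laurent_poly g"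
  shows "fls_star (f * g) = fls_star f * fls_star g"
proof (rule fls_eqI)
  fix k
  obtain N where N: "\<And>k. N < \<bar>k\<bar> \<Longrightarrow> fls_nth f k = 0" using is_laurent_polyE[OF f] by blast
  have "fls_nth (fls_star (f * g)) k = cnj (fls_nth (f * g) (- k))"
    by (simp add: fls_star_nth f g)
  also have "fls_nth (f * g) (- k) = (\<Sum>i\<in>{-N..N}. fls_nth f i * fls_nth g (- k - i))"
    by (rule fls_times_nth_eq_sum) (use N in force)+
  also have "cnj \<dots> = (\<Sum>i\<in>{-N..N}. cnj (fls_nth f i) * cnj (fls_nth g (- k - i)))"
    by simp
  also have "\<dots> = (\<Sum>j\<in>{-N..N}. cnj (fls_nth f (- j)) * cnj (fls_nth g (- (k - j))))"
    by (rule sum.reindex_bij_witness[of _ uminus uminus]) auto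
  also have "\<dots> = (\<Sum>j\<in>{-N..N}. fls_nth (fls_star f) j * fls_nth (fls_star g) (k - j))"
    by (simp add: fls_star_nth f g)
  also have "\<dots> = fls_nth (fls_star f * fls_star g) k"
  proof (rule sym, rule fls_times_nth_eq_sum)
    fix i assume "fls_nth (fls_star f) i \<noteq> 0"
    then have "\<bar>- i\<bar> \<le> N" using N by (force simp: fls_star_nth f)
    then show "i \<in> {-N..N}" by auto
  qed simp
  finally show "fls_nth (fls_star (f * g)) k = fls_nth (fls_star f * fls_star g) k" .
qed

lemma fls_star_sum:
  "(\<And>x. x \<in> A \<Longrightarrow> is_laurent_poly (f x)) \<Longrightarrow> fls_star (\<Sum>x\<in>A. f x) = (\<Sum>x\<in>A. fls_star (f x))"
  by (induction A rule: infinite_finite_induct) (auto simp: fls_star_add)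

lemma fls_star_prod:
  "(\<And>x. x \<in> A \<Longrightarrow> is_laurent_poly (f x)) \<Longrightarrow> fls_star (\<Prod>x\<in>A. f x) = (\<Prod>x\<in>A. fls_star (f x))"
  by (induction A rule: infinite_finite_induct) (auto simp: fls_star_mult)

lemma mat_star_carrier [simp]: "U \<in> carrier_mat n m \<Longrightarrow> mat_star U \<in> carrier_mat m n"
  unfolding mat_star_def by auto

lemma dim_mat_star [simp]:
  "dim_row (mat_star U) = dim_col U" "dim_col (mat_star U) = dim_row U"
  unfolding mat_star_def by auto

lemma index_mat_star [simp]:
  "i < dim_col U \<Longrightarrow> j < dim_row U \<Longrightarrow> mat_star U $$ (i, j) = fls_star (U $$ (j, i))"
  unfolding mat_star_def by auto

lemma laurent_poly_matD:
  "laurent_poly_mat U \<Longrightarrow> i < dim_row U \<Longrightarrow> j < dim_col U \<Longrightarrow> is_laurent_poly (U $$ (i, j))"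
  unfolding laurent_poly_mat_def by auto

lemma laurent_poly_matI:
  "(\<And>i j. i < dim_row U \<Longrightarrow> j < dim_col U \<Longrightarrow> is_laurent_poly (U $$ (i, j))) \<Longrightarrow> laurent_poly_mat U"
  unfolding laurent_poly_mat_def by auto

lemma laurent_poly_mat_mat:
  "(\<And>i j. i < n \<Longrightarrow> j < m \<Longrightarrow> is_laurent_poly (f (i, j))) \<Longrightarrow> laurent_poly_mat (mat n m f)"
  by (rule laurent_poly_matI) auto

lemma index_mult_mat_sum:
  assumes "A \<in> carrier_mat n m" "B \<in> carrier_mat m p" "i < n" "j < p"
  shows "(A * B) $$ (i, j) = (\<Sum>k<m. A $$ (i, k) * B $$ (k, j))"
  using assms by (auto simp: scalar_prod_def atLeast0LessThan intro!: sum.cong)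

lemma laurent_poly_mat_mult [simp]:
  assumes "laurent_poly_mat A" "laurent_poly_mat B" "dim_col A = dim_row B"
  shows "laurent_poly_mat (A * B)"
proof (rule laurent_poly_matI)
  fix i j assume ij: "i < dim_row (A * B)" "j < dim_col (A * B)"
  have "(A * B) $$ (i, j) = (\<Sum>k<dim_col A. A $$ (i, k) * B $$ (k, j))"
    by (rule index_mult_mat_sum[of A "dim_row A" "dim_col A" B "dim_col B"]) (use ij assms(3) in auto)
  moreover have "is_laurent_poly (\<Sum>k<dim_col A. A $$ (i, k) * B $$ (k, j))"
    using ij assms by (auto intro!: is_laurent_poly_sum is_laurent_poly_mult laurent_poly_matD)
  ultimately show "is_laurent_poly ((A * B) $$ (i, j))" by simp
qed

lemma laurent_poly_mat_star [simp]: "laurent_poly_mat A \<Longrightarrow> laurent_poly_mat (mat_star A)"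
  by (rule laurent_poly_matI) (auto intro!: is_laurent_poly_fls_star laurent_poly_matD)

lemma laurent_poly_mat_one [simp]: "laurent_poly_mat (1\<^sub>m n)"
  by (rule laurent_poly_matI) auto

lemma mat_star_mat_star [simp]: "laurent_poly_mat A \<Longrightarrow> mat_star (mat_star A) = A"
  by (rule eq_matI) (auto simp: laurent_poly_matD)

lemma mat_star_one [simp]: "mat_star (1\<^sub>m n) = 1\<^sub>m n"
  by (rule eq_matI) auto

lemma mat_star_mult:
  assumes A: "A \<in> carrier_mat n m" and B: "B \<in> carrier_mat m p"
    and "laurent_poly_mat A" "laurent_poly_mat B"
  shows "mat_star (A * B) = mat_star B * mat_star A"
proof (rule eq_matI)
  fix i j assume "i < dim_row (mat_star B * mat_star A)" "j < dim_col (mat_star B * mat_star A)"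
  then have i: "i < p" and j: "j < n" using A B by auto
  have "mat_star (A * B) $$ (i, j) = fls_star (\<Sum>k<m. A $$ (j, k) * B $$ (k, i))"
    using A B i j by (simp add: index_mult_mat_sum[OF A B j i])
  also have "\<dots> = (\<Sum>k<m. fls_star (B $$ (k, i)) * fls_star (A $$ (j, k)))"
    using A B i j assms by (subst fls_star_sum) (auto simp: fls_star_mult laurent_poly_matD mult.commute)
  also have "\<dots> = (mat_star B * mat_star A) $$ (i, j)"
    by (rule sym, subst index_mult_mat_sum[of _ p m _ n]) (use A B i j in auto)
  finally show "mat_star (A * B) $$ (i, j) = (mat_star B * mat_star A) $$ (i, j)" .
qed (use A B in simp_all)

lemma is_laurent_poly_det:
  assumes A: "A \<in> carrier_mat n n" and "laurent_poly_mat A"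
  shows "is_laurent_poly (det A)"
  unfolding det_def'[OF A] using assms
  by (auto intro!: is_laurent_poly_sum is_laurent_poly_mult is_laurent_poly_prod laurent_poly_matD
           simp: permutes_in_image)

lemma det_mat_star:
  assumes A: "A \<in> carrier_mat n n" and lA: "laurent_poly_mat A"
  shows "det (mat_star A) = fls_star (det A)"
proof -
  have lp_entry: "is_laurent_poly (A $$ (i, p i))" if "p permutes {0..<n}" "i \<in> {0..<n}" for p i
    using A lA that by (auto intro!: laurent_poly_matD simp: permutes_in_image)
  have "mat_star A = transpose_mat (map_mat fls_star A)"
    by (rule eq_matI) auto
  then have "det (mat_star A) = det (map_mat fls_star A)"
    by (simp add: det_transpose[of _ n] A)
  also have "\<dots> = (\<Sum>p | p permutes {0..<n}. signof p * (\<Prod>i = 0..<n. fls_star (A $$ (i, p i))))"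
    by (subst det_def'[of _ n]) (use A in \<open>auto intro!: sum.cong prod.cong\<close>)
  also have "\<dots> = fls_star (det A)"
  proof -
    have lp_prod: "is_laurent_poly (\<Prod>i = 0..<n. A $$ (i, p i))" if "p permutes {0..<n}" for p
      using lp_entry[OF that] by (rule is_laurent_poly_prod)
    have "fls_star (signof p * (\<Prod>i = 0..<n. A $$ (i, p i)))
        = signof p * (\<Prod>i = 0..<n. fls_star (A $$ (i, p i)))" if "p permutes {0..<n}" for p
      using lp_prod[OF that] by (subst fls_star_mult) (auto intro!: fls_star_prod lp_entry[OF that])
    moreover have "is_laurent_poly (signof p * (\<Prod>i = 0..<n. A $$ (i, p i)))"
      if "p permutes {0..<n}" for p
      using lp_prod[OF that] by simp
    ultimately show ?thesis
      unfolding det_def'[OF A] by (subst fls_star_sum) (auto intro!: sum.cong)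
  qed
  finally show ?thesis .
qed

lemma hermite_lp_mat_entry:
  assumes "hermite_lp_mat H" "H \<in> carrier_mat n n" "a < n" "b < n"
  shows "fls_star (H $$ (b, a)) = H $$ (a, b)" and "is_laurent_poly (H $$ (a, b))"
  using assms unfolding hermite_lp_mat_def
  by (metis carrier_matD(1,2) index_mat_star, auto intro: laurent_poly_matD)

definition row_comb_mat :: "nat \<Rightarrow> nat \<Rightarrow> (nat \<Rightarrow> complex fls) \<Rightarrow> complex fls mat" where
  "row_comb_mat n k r = mat n n (\<lambda>(a, b). (if a = b then 1 else 0) + (if a = k then r b else 0))"

definition col_comb_mat :: "nat \<Rightarrow> nat \<Rightarrow> (nat \<Rightarrow> complex fls) \<Rightarrow> complex fls mat" where
  "col_comb_mat n k c = mat n n (\<lambda>(a, b). (if a = b then 1 else 0) + (if b = k then c a else 0))"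

definition perm_mat :: "nat \<Rightarrow> (nat \<Rightarrow> nat) \<Rightarrow> complex fls mat" where
  "perm_mat n p = mat n n (\<lambda>(a, b). if b = p a then 1 else 0)"

lemma row_comb_mat_carrier [simp]: "row_comb_mat n k r \<in> carrier_mat n n"
  and col_comb_mat_carrier [simp]: "col_comb_mat n k c \<in> carrier_mat n n"
  and perm_mat_carrier [simp]: "perm_mat n p \<in> carrier_mat n n"
  unfolding row_comb_mat_def col_comb_mat_def perm_mat_def by simp_all

lemma dim_row_comb_mat [simp]: "dim_row (row_comb_mat n k r) = n" "dim_col (row_comb_mat n k r) = n"
  and dim_col_comb_mat [simp]: "dim_row (col_comb_mat n k c) = n" "dim_col (col_comb_mat n k c) = n"
  and dim_perm_mat [simp]: "dim_row (perm_mat n p) = n" "dim_col (perm_mat n p) = n"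
  unfolding row_comb_mat_def col_comb_mat_def perm_mat_def by simp_all

lemma index_row_comb_mat:
  "a < n \<Longrightarrow> b < n \<Longrightarrow> row_comb_mat n k r $$ (a, b) = (if a = b then 1 else 0) + (if a = k then r b else 0)"
  unfolding row_comb_mat_def by simp

lemma index_col_comb_mat:
  "a < n \<Longrightarrow> b < n \<Longrightarrow> col_comb_mat n k c $$ (a, b) = (if a = b then 1 else 0) + (if b = k then c a else 0)"
  unfolding col_comb_mat_def by simp

lemma index_perm_mat: "a < n \<Longrightarrow> b < n \<Longrightarrow> perm_mat n p $$ (a, b) = (if b = p a then 1 else 0)"
  unfolding perm_mat_def by simp

lemma laurent_poly_mat_row_comb_mat [simp]:
  "(\<And>b. b < n \<Longrightarrow> is_laurent_poly (r b)) \<Longrightarrow> laurent_poly_mat (row_comb_mat n k r)"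
  and laurent_poly_mat_col_comb_mat [simp]:
  "(\<And>b. b < n \<Longrightarrow> is_laurent_poly (c b)) \<Longrightarrow> laurent_poly_mat (col_comb_mat n k c)"
  and laurent_poly_mat_perm_mat [simp]: "laurent_poly_mat (perm_mat n p)"
  unfolding row_comb_mat_def col_comb_mat_def perm_mat_def by (auto intro!: laurent_poly_mat_mat)

lemma row_comb_mat_mult_index:
  assumes H: "H \<in> carrier_mat n m" and a: "a < n" and b: "b < m"
  shows "(row_comb_mat n k r * H) $$ (a, b)
    = H $$ (a, b) + (if a = k then (\<Sum>l<n. r l * H $$ (l, b)) else 0)"
proof -
  have "(row_comb_mat n k r * H) $$ (a, b)
      = (\<Sum>l<n. (if a = l then H $$ (l, b) else 0) + (if a = k then r l * H $$ (l, b) else 0))"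
    by (subst index_mult_mat_sum[OF row_comb_mat_carrier H a b])
      (use a in \<open>auto simp: index_row_comb_mat distrib_right intro!: sum.cong\<close>)
  then show ?thesis using a by (simp add: sum.distrib)
qed

lemma mult_star_row_comb_mat_index:
  assumes H: "H \<in> carrier_mat m n" and a: "a < m" and b: "b < n"
    and r: "\<And>l. l < n \<Longrightarrow> is_laurent_poly (r l)"
  shows "(H * mat_star (row_comb_mat n k r)) $$ (a, b)
    = H $$ (a, b) + (if b = k then (\<Sum>l<n. H $$ (a, l) * fls_star (r l)) else 0)"
proof -
  have "(H * mat_star (row_comb_mat n k r)) $$ (a, b)
      = (\<Sum>l<n. (if l = b then H $$ (a, l) else 0) + (if b = k then H $$ (a, l) * fls_star (r l) else 0))"
    by (subst index_mult_mat_sum[OF H _ a b])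
      (use b r in \<open>auto simp: index_row_comb_mat fls_star_add distrib_left intro!: sum.cong\<close>)
  then show ?thesis using b by (simp add: sum.distrib)
qed

lemma col_comb_mat_mult_index:
  assumes H: "H \<in> carrier_mat n m" and a: "a < n" and b: "b < m" and k: "k < n"
  shows "(col_comb_mat n k c * H) $$ (a, b) = H $$ (a, b) + c a * H $$ (k, b)"
proof -
  have "(col_comb_mat n k c * H) $$ (a, b)
      = (\<Sum>l<n. (if a = l then H $$ (l, b) else 0) + (if l = k then c a * H $$ (l, b) else 0))"
    by (subst index_mult_mat_sum[OF col_comb_mat_carrier H a b])
      (use a in \<open>auto simp: index_col_comb_mat distrib_right intro!: sum.cong\<close>)
  then show ?thesis using a k by (simp add: sum.distrib)
qed

lemma mult_star_col_comb_mat_index: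
  assumes H: "H \<in> carrier_mat m n" and a: "a < m" and b: "b < n" and k: "k < n"
    and c: "\<And>l. l < n \<Longrightarrow> is_laurent_poly (c l)"
  shows "(H * mat_star (col_comb_mat n k c)) $$ (a, b) = H $$ (a, b) + H $$ (a, k) * fls_star (c b)"
proof -
  have "(H * mat_star (col_comb_mat n k c)) $$ (a, b)
      = (\<Sum>l<n. (if l = b then H $$ (a, l) else 0) + (if l = k then H $$ (a, l) * fls_star (c b) else 0))"
    by (subst index_mult_mat_sum[OF H _ a b])
      (use b c in \<open>auto simp: index_col_comb_mat fls_star_add distrib_left intro!: sum.cong\<close>)
  then show ?thesis using b k by (simp add: sum.distrib)
qed

lemma row_comb_mat_inverse:
  assumes k: "k < n" and rk: "r k = 0"
  shows "row_comb_mat n k (\<lambda>b. - r b) * row_comb_mat n k r = 1\<^sub>m n"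
proof (rule eq_matI)
  fix a b assume "a < dim_row (1\<^sub>m n)" "b < dim_col (1\<^sub>m n)"
  then have a: "a < n" and b: "b < n" by auto
  have "(row_comb_mat n k (\<lambda>b. - r b) * row_comb_mat n k r) $$ (a, b)
      = row_comb_mat n k r $$ (a, b) + (if a = k then (\<Sum>l<n. - r l * row_comb_mat n k r $$ (l, b)) else 0)"
    by (rule row_comb_mat_mult_index[OF row_comb_mat_carrier a b])
  also have "(\<Sum>l<n. - r l * row_comb_mat n k r $$ (l, b))
      = (\<Sum>l<n. (if l = b then - r l else 0) + (if l = k then - r l * r b else 0))"
    by (rule sum.cong) (use b in \<open>auto simp: index_row_comb_mat distrib_left\<close>)
  also have "\<dots> = - r b"
    using b k rk by (simp add: sum.distrib)
  finally show "(row_comb_mat n k (\<lambda>b. - r b) * row_comb_mat n k r) $$ (a, b) = 1\<^sub>m n $$ (a, b)"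
    using a b by (simp add: index_row_comb_mat)
qed auto

lemma col_comb_mat_inverse:
  assumes k: "k < n" and ck: "c k = 0"
  shows "col_comb_mat n k (\<lambda>b. - c b) * col_comb_mat n k c = 1\<^sub>m n"
proof (rule eq_matI)
  fix a b assume "a < dim_row (1\<^sub>m n)" "b < dim_col (1\<^sub>m n)"
  then have a: "a < n" and b: "b < n" by auto
  show "(col_comb_mat n k (\<lambda>b. - c b) * col_comb_mat n k c) $$ (a, b) = 1\<^sub>m n $$ (a, b)"
    by (subst col_comb_mat_mult_index[OF col_comb_mat_carrier a b k])
      (use a b k ck in \<open>simp add: index_col_comb_mat\<close>)
qed auto

lemma perm_mat_mult_star:
  assumes p: "p permutes {..<n}"
  shows "perm_mat n p * mat_star (perm_mat n p) = 1\<^sub>m n"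
proof (rule eq_matI)
  fix a b assume "a < dim_row (1\<^sub>m n)" "b < dim_col (1\<^sub>m n)"
  then have a: "a < n" and b: "b < n" by auto
  have pab: "p a < n" "p b < n" using permutes_in_image[OF p] a b by auto
  have "(perm_mat n p * mat_star (perm_mat n p)) $$ (a, b)
      = (\<Sum>l<n. perm_mat n p $$ (a, l) * fls_star (perm_mat n p $$ (b, l)))"
    by (subst index_mult_mat_sum[OF perm_mat_carrier _ a b]) (use a b in auto)
  also have "\<dots> = (\<Sum>l<n. if l = p a then (if l = p b then 1 else 0) else 0)"
    by (rule sum.cong) (use a b in \<open>auto simp: index_perm_mat\<close>)
  also have "\<dots> = 1\<^sub>m n $$ (a, b)"
    using a b pab p by (auto simp: permutes_inj[THEN injD])
  finally show "(perm_mat n p * mat_star (perm_mat n p)) $$ (a, b) = 1\<^sub>m n $$ (a, b)" .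
qed auto

lemma perm_mat_congruence_index:
  assumes p: "p permutes {..<n}" and H: "H \<in> carrier_mat n n" and a: "a < n" and b: "b < n"
  shows "(perm_mat n p * H * mat_star (perm_mat n p)) $$ (a, b) = H $$ (p a, p b)"
proof -
  have pab: "p a < n" "p b < n" using permutes_in_image[OF p] a b by auto
  have "(perm_mat n p * H * mat_star (perm_mat n p)) $$ (a, b)
      = (\<Sum>l<n. (perm_mat n p * H) $$ (a, l) * fls_star (perm_mat n p $$ (b, l)))"
    by (subst index_mult_mat_sum[of _ n n _ n]) (use a b H in auto)
  also have "\<dots> = (\<Sum>l<n. if l = p b then (perm_mat n p * H) $$ (a, l) else 0)"
    by (rule sum.cong) (use a b in \<open>auto simp: index_perm_mat\<close>)
  also have "\<dots> = (\<Sum>l<n. perm_mat n p $$ (a, l) * H $$ (l, p b))"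
    using pab index_mult_mat_sum[OF perm_mat_carrier H a pab(2)] by simp
  also have "\<dots> = (\<Sum>l<n. if l = p a then H $$ (l, p b) else 0)"
    by (rule sum.cong) (use a in \<open>auto simp: index_perm_mat\<close>)
  also have "\<dots> = H $$ (p a, p b)"
    using pab by simp
  finally show ?thesis .
qed

lemma permutes_moves_other_point:
  assumes p: "p permutes S" and "p \<noteq> id"
  obtains i where "i \<in> S" "i \<noteq> k" "p i \<noteq> i"
proof -
  obtain j where j: "p j \<noteq> j" using \<open>p \<noteq> id\<close> by (auto simp: fun_eq_iff)
  then have "j \<in> S" using p by (meson permutes_not_in)
  show ?thesis
  proof (cases "j = k")
    case True
    have "p (p k) \<noteq> p k" using j True permutes_inj[OF p] by (auto dest: injD)
    then show ?thesis using that[of "p k"] j True p \<open>j \<in> S\<close> by (simp add: permutes_in_image)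
  qed (use that j \<open>j \<in> S\<close> in blast)
qed

text \<open>Off row \<open>k\<close> the matrix is the identity, so every permutation other than \<open>id\<close> picks an
  off-diagonal zero from some row \<open>i \<noteq> k\<close>.\<close>

lemma det_row_comb_mat:
  assumes k: "k < n" and rk: "r k = 0"
  shows "det (row_comb_mat n k r) = 1"
proof -
  let ?R = "row_comb_mat n k r"
  let ?S = "{p. p permutes {0..<n}}"
  have vanish: "(\<Prod>i = 0..<n. ?R $$ (i, p i)) = 0" if p: "p \<in> ?S - {id}" for p
  proof -
    from p obtain i where i: "i \<in> {0..<n}" "i \<noteq> k" "p i \<noteq> i"
      using permutes_moves_other_point[of p "{0..<n}" k] by blast
    then have "?R $$ (i, p i) = 0"
      using p by (auto simp: index_row_comb_mat permutes_in_image)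
    then show ?thesis using i by (intro prod_zero) auto
  qed
  have "det ?R = (\<Sum>p\<in>?S. signof p * (\<Prod>i = 0..<n. ?R $$ (i, p i)))"
    by (rule det_def') simp
  also have "\<dots> = (\<Sum>p\<in>{id}. signof p * (\<Prod>i = 0..<n. ?R $$ (i, p i)))"
    by (rule sum.mono_neutral_right) (auto simp: vanish permutes_id finite_permutations)
  also have "\<dots> = 1"
  proof -
    have "(if i = k then r i else 0) = 0" for i using rk by auto
    then show ?thesis by (simp add: index_row_comb_mat)
  qed
  finally show ?thesis .
qed

lemma det_col_comb_mat:
  assumes "k < n" and "c k = 0"
  shows "det (col_comb_mat n k c) = 1"
proof -
  have "col_comb_mat n k c = transpose_mat (row_comb_mat n k c)"
    by (rule eq_matI) (auto simp: index_row_comb_mat index_col_comb_mat)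
  then show ?thesis using det_transpose[of "row_comb_mat n k c" n] det_row_comb_mat assms by simp
qed

definition signature_congruent :: "nat \<Rightarrow> complex fls mat \<Rightarrow> bool" where
  "signature_congruent n H \<longleftrightarrow> (\<exists>p m U. p + m = n \<and> U \<in> carrier_mat n n \<and> laurent_poly_mat U \<and>
     H = U * signature_mat p m * mat_star U)"

definition lp_congruent :: "nat \<Rightarrow> complex fls mat \<Rightarrow> complex fls mat \<Rightarrow> bool" where
  "lp_congruent n H G \<longleftrightarrow> (\<exists>W V. W \<in> carrier_mat n n \<and> V \<in> carrier_mat n n \<and>
     laurent_poly_mat W \<and> laurent_poly_mat V \<and> V * W = 1\<^sub>m n \<and>
     det W * fls_star (det W) = 1 \<and> G = W * H * mat_star W)"

lemma lp_congruentI: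
  assumes "W \<in> carrier_mat n n" "V \<in> carrier_mat n n" "laurent_poly_mat W" "laurent_poly_mat V"
    "V * W = 1\<^sub>m n" "det W * fls_star (det W) = 1"
  shows "lp_congruent n H (W * H * mat_star W)"
  using assms unfolding lp_congruent_def by blast

lemma lp_congruent_refl:
  assumes "H \<in> carrier_mat n n" shows "lp_congruent n H H"
  using lp_congruentI[of "1\<^sub>m n" n "1\<^sub>m n" H] assms by simp

lemma lp_congruent_trans:
  assumes HG: "lp_congruent n H G" and GK: "lp_congruent n G K" and H: "H \<in> carrier_mat n n"
  shows "lp_congruent n H K"
proof -
  obtain W1 V1 where W1: "W1 \<in> carrier_mat n n" "V1 \<in> carrier_mat n n" "laurent_poly_mat W1"
    "laurent_poly_mat V1" and VW1: "V1 * W1 = 1\<^sub>m n" and dW1: "det W1 * fls_star (det W1) = 1"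
    and G: "G = W1 * H * mat_star W1"
    using HG unfolding lp_congruent_def by blast
  obtain W2 V2 where W2: "W2 \<in> carrier_mat n n" "V2 \<in> carrier_mat n n" "laurent_poly_mat W2"
    "laurent_poly_mat V2" and VW2: "V2 * W2 = 1\<^sub>m n" and dW2: "det W2 * fls_star (det W2) = 1"
    and K: "K = W2 * G * mat_star W2"
    using GK unfolding lp_congruent_def by blast
  have "(V1 * V2) * (W2 * W1) = V1 * (V2 * W2) * W1"
    using W1 W2 by (simp add: assoc_mult_mat[of _ n n _ n _ n] mult_carrier_mat[of _ n n _ n])
  then have inverse: "(V1 * V2) * (W2 * W1) = 1\<^sub>m n" using W1 W2 VW1 VW2 by simp
  have "det (W2 * W1) * fls_star (det (W2 * W1))
      = (det W2 * fls_star (det W2)) * (det W1 * fls_star (det W1))"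
    using W1 W2 by (simp add: det_mult[of _ n] fls_star_mult is_laurent_poly_det mult_ac)
  then have unimodular: "det (W2 * W1) * fls_star (det (W2 * W1)) = 1" using dW1 dW2 by simp
  have "K = (W2 * W1) * H * (mat_star W1 * mat_star W2)"
    unfolding K G using W1 W2 H by (simp add: assoc_mult_mat[of _ n n _ n _ n] mult_carrier_mat[of _ n n _ n])
  also have "mat_star W1 * mat_star W2 = mat_star (W2 * W1)"
    using W1 W2 by (simp add: mat_star_mult[of _ n n _ n])
  finally show ?thesis
    using W1 W2 inverse unimodular by (auto intro!: lp_congruentI[of _ _ "V1 * V2"])
qed

lemma lp_congruent_hermitian:
  assumes HG: "lp_congruent n H G" and H: "H \<in> carrier_mat n n" "hermite_lp_mat H"
  shows "G \<in> carrier_mat n n" "hermite_lp_mat G"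
proof -
  obtain W where W: "W \<in> carrier_mat n n" "laurent_poly_mat W" and G: "G = W * H * mat_star W"
    using HG unfolding lp_congruent_def by blast
  have lH: "laurent_poly_mat H" and sH: "mat_star H = H"
    using H unfolding hermite_lp_mat_def by auto
  show "G \<in> carrier_mat n n" using W H unfolding G by (auto intro: mult_carrier_mat)
  have "mat_star G = mat_star (mat_star W) * mat_star (W * H)"
    unfolding G by (rule mat_star_mult[of _ n n _ n]) (use W H lH in auto)
  also have "\<dots> = W * (H * mat_star W)"
    using W H lH sH by (simp add: mat_star_mult[of _ n n _ n])
  also have "\<dots> = G"
    unfolding G using W H by (simp add: assoc_mult_mat[of _ n n _ n _ n])
  finally show "hermite_lp_mat G"
    unfolding hermite_lp_mat_def G using W H lH by auto
qed

lemma det_lp_congruent: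
  assumes HG: "lp_congruent n H G" and H: "H \<in> carrier_mat n n"
  shows "det G = det H"
proof -
  obtain W where W: "W \<in> carrier_mat n n" "laurent_poly_mat W" "det W * fls_star (det W) = 1"
    and G: "G = W * H * mat_star W"
    using HG unfolding lp_congruent_def by blast
  have "det G = det H * (det W * fls_star (det W))"
    unfolding G using W H by (simp add: det_mult[of _ n] det_mat_star)
  then show ?thesis using W by simp
qed

lemma signature_congruent_mult:
  assumes W: "W \<in> carrier_mat n n" "laurent_poly_mat W"
    and H: "H \<in> carrier_mat n n" and "signature_congruent n H"
  shows "signature_congruent n (W * H * mat_star W)"
proof -
  obtain p m U where pm: "p + m = n" and U: "U \<in> carrier_mat n n" "laurent_poly_mat U"
    and HU: "H = U * signature_mat p m * mat_star U"
    using \<open>signature_congruent n H\<close> unfolding signature_congruent_def by blast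
  have J: "signature_mat p m \<in> carrier_mat n n"
    using pm unfolding signature_mat_def by simp
  have "W * H * mat_star W = (W * U) * signature_mat p m * (mat_star U * mat_star W)"
    unfolding HU using W U J by (simp add: assoc_mult_mat[of _ n n _ n _ n] mult_carrier_mat[of _ n n _ n])
  also have "mat_star U * mat_star W = mat_star (W * U)"
    using W U by (simp add: mat_star_mult[of _ n n _ n])
  finally show ?thesis
    unfolding signature_congruent_def using pm W U by (intro exI[of _ p] exI[of _ m] exI[of _ "W * U"]) auto
qed

lemma signature_congruent_signature_mat: "signature_congruent (p + m) (signature_mat p m)"
  unfolding signature_congruent_def
  by (intro exI[of _ p] exI[of _ m] exI[of _ "1\<^sub>m (p + m)"]) (simp add: signature_mat_def)

lemma signature_congruent_if_lp_congruent:
  assumes HG: "lp_congruent n H G" and H: "H \<in> carrier_mat n n" and "signature_congruent n G"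
  shows "signature_congruent n H"
proof -
  obtain W V where W: "W \<in> carrier_mat n n" "V \<in> carrier_mat n n" "laurent_poly_mat W"
    "laurent_poly_mat V" and VW: "V * W = 1\<^sub>m n" and G: "G = W * H * mat_star W"
    using HG unfolding lp_congruent_def by blast
  have sVW: "mat_star W * mat_star V = 1\<^sub>m n"
    using mat_star_mult[of V n n W n] W VW by simp
  have "H = (V * W) * H * (mat_star W * mat_star V)" using H VW sVW by simp
  also have "\<dots> = V * G * mat_star V"
    unfolding G using W H by (simp add: assoc_mult_mat[of _ n n _ n _ n] mult_carrier_mat[of _ n n _ n])
  finally show ?thesis
    using signature_congruent_mult[of V n G] W H G \<open>signature_congruent n G\<close>
    by (simp add: mult_carrier_mat[of _ n n _ n])
qed

lemma lp_congruent_row_comb: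
  assumes "k < n" "r k = 0" "\<And>l. l < n \<Longrightarrow> is_laurent_poly (r l)"
  shows "lp_congruent n H (row_comb_mat n k r * H * mat_star (row_comb_mat n k r))"
  by (rule lp_congruentI[OF _ _ _ _ row_comb_mat_inverse])
    (use assms in \<open>simp_all add: det_row_comb_mat\<close>)

lemma lp_congruent_col_comb:
  assumes "k < n" "c k = 0" "\<And>l. l < n \<Longrightarrow> is_laurent_poly (c l)"
  shows "lp_congruent n H (col_comb_mat n k c * H * mat_star (col_comb_mat n k c))"
  by (rule lp_congruentI[OF _ _ _ _ col_comb_mat_inverse])
    (use assms in \<open>simp_all add: det_col_comb_mat\<close>)

lemma lp_congruent_perm:
  assumes p: "p permutes {..<n}"
  shows "lp_congruent n H (perm_mat n p * H * mat_star (perm_mat n p))"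
proof (rule lp_congruentI)
  let ?P = "perm_mat n p"
  have PP: "?P * mat_star ?P = 1\<^sub>m n" by (rule perm_mat_mult_star[OF p])
  then show "mat_star ?P * ?P = 1\<^sub>m n"
    by (rule mat_mult_left_right_inverse[OF perm_mat_carrier mat_star_carrier[OF perm_mat_carrier]])
  have "det ?P * det (mat_star ?P) = 1"
    using PP det_mult[of ?P n "mat_star ?P"] by simp
  then show "det ?P * fls_star (det ?P) = 1" by (simp add: det_mat_star[of _ n])
qed simp_all

definition diag_cons :: "complex fls \<Rightarrow> complex fls mat \<Rightarrow> complex fls mat" where
  "diag_cons d M = mat (Suc (dim_row M)) (Suc (dim_col M))
     (\<lambda>(a, b). if a = 0 \<and> b = 0 then d else if a = 0 \<or> b = 0 then 0 else M $$ (a - 1, b - 1))"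

lemma diag_cons_carrier [simp]: "M \<in> carrier_mat n m \<Longrightarrow> diag_cons d M \<in> carrier_mat (Suc n) (Suc m)"
  unfolding diag_cons_def by auto

lemma dim_diag_cons [simp]:
  "dim_row (diag_cons d M) = Suc (dim_row M)" "dim_col (diag_cons d M) = Suc (dim_col M)"
  unfolding diag_cons_def by auto

lemma index_diag_cons:
  "a < Suc (dim_row M) \<Longrightarrow> b < Suc (dim_col M) \<Longrightarrow> diag_cons d M $$ (a, b) =
     (if a = 0 \<and> b = 0 then d else if a = 0 \<or> b = 0 then 0 else M $$ (a - 1, b - 1))"
  unfolding diag_cons_def by simp

lemma laurent_poly_mat_diag_cons [simp]:
  "is_laurent_poly d \<Longrightarrow> laurent_poly_mat M \<Longrightarrow> laurent_poly_mat (diag_cons d M)"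
  unfolding diag_cons_def by (rule laurent_poly_mat_mat) (auto intro: laurent_poly_matD)

lemma mat_star_diag_cons: "mat_star (diag_cons d M) = diag_cons (fls_star d) (mat_star M)"
  by (rule eq_matI) (auto simp: index_diag_cons)

lemma diag_cons_mult:
  assumes M: "M \<in> carrier_mat n m" and N: "N \<in> carrier_mat m p"
  shows "diag_cons a M * diag_cons b N = diag_cons (a * b) (M * N)"
proof (rule eq_matI)
  fix i j assume "i < dim_row (diag_cons (a * b) (M * N))" "j < dim_col (diag_cons (a * b) (M * N))"
  then have i: "i < Suc n" and j: "j < Suc p" using M N by auto
  have "(diag_cons a M * diag_cons b N) $$ (i, j)
      = diag_cons a M $$ (i, 0) * diag_cons b N $$ (0, j)
        + (\<Sum>l<m. diag_cons a M $$ (i, Suc l) * diag_cons b N $$ (Suc l, j))"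
    by (subst index_mult_mat_sum[OF diag_cons_carrier[OF M] diag_cons_carrier[OF N] i j],
        subst sum.lessThan_Suc_shift) simp
  also have "\<dots> = diag_cons (a * b) (M * N) $$ (i, j)"
  proof (cases "i = 0 \<or> j = 0")
    case True then show ?thesis using i j M N by (auto simp: index_diag_cons)
  next
    case False
    then obtain i' j' where ij: "i = Suc i'" "j = Suc j'" by (cases i; cases j) auto
    then have "i' < n" "j' < p" using i j by auto
    then show ?thesis using ij M N by (auto simp: index_diag_cons index_mult_mat_sum[OF M N, symmetric])
  qed
  finally show "(diag_cons a M * diag_cons b N) $$ (i, j) = diag_cons (a * b) (M * N) $$ (i, j)" .
qed (use M N in auto)

lemma det_diag_cons:
  assumes M: "M \<in> carrier_mat n n"
  shows "det (diag_cons d M) = d * det M"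
proof -
  have four_block: "diag_cons d M = four_block_mat (mat 1 1 (\<lambda>_. d)) (0\<^sub>m 1 n) (0\<^sub>m n 1) M"
    by (rule eq_matI) (use M in \<open>auto simp: index_diag_cons\<close>)
  have "det (diag_cons d M) = det (mat 1 1 (\<lambda>_. d)) * det M"
    unfolding four_block by (rule det_four_block_mat_lower_left_zero_col) (use M in auto)
  also have "det (mat 1 1 (\<lambda>_. d)) = d" by (subst det_single) auto
  finally show ?thesis .
qed

lemma hermite_lp_mat_diag_consD:
  assumes "hermite_lp_mat (diag_cons d R)" "R \<in> carrier_mat n n"
  shows "hermite_lp_mat R"
proof -
  have lp: "laurent_poly_mat (diag_cons d R)" and sym: "mat_star (diag_cons d R) = diag_cons d R"
    using assms(1) unfolding hermite_lp_mat_def by auto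
  have "laurent_poly_mat R"
  proof (rule laurent_poly_matI)
    fix a b assume "a < dim_row R" "b < dim_col R"
    then show "is_laurent_poly (R $$ (a, b))"
      using laurent_poly_matD[OF lp, of "Suc a" "Suc b"] by (simp add: index_diag_cons)
  qed
  moreover have "mat_star R = R"
  proof (rule eq_matI)
    fix a b assume "a < dim_row R" "b < dim_col R"
    then show "mat_star R $$ (a, b) = R $$ (a, b)"
      using arg_cong[OF sym, of "\<lambda>M. M $$ (Suc a, Suc b)"] assms(2) by (simp add: index_diag_cons)
  qed (use assms(2) in auto)
  ultimately show ?thesis unfolding hermite_lp_mat_def by simp
qed

lemma signature_mat_carrier [simp]: "signature_mat p m \<in> carrier_mat (p + m) (p + m)"
  and dim_signature_mat [simp]:
    "dim_row (signature_mat p m) = p + m" "dim_col (signature_mat p m) = p + m"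
  and laurent_poly_mat_signature_mat [simp]: "laurent_poly_mat (signature_mat p m)"
  unfolding signature_mat_def by (auto intro!: laurent_poly_mat_mat)

lemma index_signature_mat:
  "a < p + m \<Longrightarrow> b < p + m \<Longrightarrow>
     signature_mat p m $$ (a, b) = (if a = b then if a < p then 1 else - 1 else 0)"
  unfolding signature_mat_def by simp

lemma diag_cons_signature_mat_pos: "diag_cons 1 (signature_mat p m) = signature_mat (Suc p) m"
  by (rule eq_matI) (auto simp: index_diag_cons signature_mat_def)

definition front_cycle :: "nat \<Rightarrow> nat \<Rightarrow> nat" where
  "front_cycle p a = (if a < p then Suc a else if a = p then 0 else a)"

lemma front_cycle_permutes: "front_cycle p permutes {..<Suc (p + m)}"
proof (rule bij_imp_permutes)
  show "bij_betw (front_cycle p) {..<Suc (p + m)} {..<Suc (p + m)}"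
    by (rule bij_betw_byWitness[of _ "\<lambda>b. if b = 0 then p else if b \<le> p then b - 1 else b"])
      (auto simp: front_cycle_def)
qed (auto simp: front_cycle_def)

text \<open>The new \<open>-1\<close> in front has to be moved behind the \<open>p\<close> entries \<open>+1\<close>.\<close>

lemma diag_cons_signature_mat_neg:
  fixes p m :: nat
  defines "P \<equiv> perm_mat (Suc (p + m)) (front_cycle p)"
  shows "diag_cons (- 1) (signature_mat p m) = mat_star P * signature_mat p (Suc m) * P"
proof -
  let ?N = "Suc (p + m)"
  let ?M = "diag_cons (- 1) (signature_mat p m)"
  have M: "?M \<in> carrier_mat ?N ?N" by simp
  have P: "P \<in> carrier_mat ?N ?N" unfolding P_def by simp
  have PP: "P * mat_star P = 1\<^sub>m ?N" unfolding P_def by (rule perm_mat_mult_star[OF front_cycle_permutes])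
  have PP': "mat_star P * P = 1\<^sub>m ?N" by (rule mat_mult_left_right_inverse[OF P _ PP]) (use P in simp)
  have conj: "P * ?M * mat_star P = signature_mat p (Suc m)"
  proof (rule eq_matI)
    fix a b assume "a < dim_row (signature_mat p (Suc m))" "b < dim_col (signature_mat p (Suc m))"
    then have a: "a < ?N" and b: "b < ?N" by (auto simp: signature_mat_def)
    have "?M $$ (front_cycle p a, front_cycle p b) = signature_mat p (Suc m) $$ (a, b)"
      using a b by (cases "a < p"; cases "a = p"; cases "b < p"; cases "b = p")
        (auto simp: index_diag_cons index_signature_mat front_cycle_def)
    then show "(P * ?M * mat_star P) $$ (a, b) = signature_mat p (Suc m) $$ (a, b)"
      unfolding P_def perm_mat_congruence_index[OF front_cycle_permutes M a b] .
  qed (use P in auto)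
  have "?M = (mat_star P * P) * ?M * (mat_star P * P)" using M by (simp add: PP')
  also have "\<dots> = mat_star P * (P * ?M * mat_star P) * P"
    using P M by (simp add: assoc_mult_mat[of _ ?N ?N _ ?N _ ?N] mult_carrier_mat[of _ ?N ?N _ ?N])
  finally show ?thesis by (simp add: conj)
qed

lemma signature_congruent_diag_cons_sign:
  assumes "s = 1 \<or> s = - 1"
  shows "signature_congruent (Suc (p + m)) (diag_cons s (signature_mat p m))"
  using assms
proof
  assume "s = 1"
  then show ?thesis
    using signature_congruent_signature_mat[of "Suc p" m] by (simp add: diag_cons_signature_mat_pos)
next
  assume "s = - 1"
  define P where "P = perm_mat (Suc (p + m)) (front_cycle p)"
  have "mat_star (mat_star P) = P" unfolding P_def by simp
  then have "diag_cons s (signature_mat p m) = mat_star P * signature_mat p (Suc m) * mat_star (mat_star P)"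
    using \<open>s = - 1\<close> diag_cons_signature_mat_neg[of p m] by (simp add: P_def)
  then show ?thesis
    using signature_congruent_mult[of "mat_star P" "Suc (p + m)" "signature_mat p (Suc m)"]
      signature_congruent_signature_mat[of p "Suc m"]
    by (simp add: P_def signature_mat_def)
qed

text \<open>\<open>d = \<surd>|d| \<cdot> sgn d \<cdot> \<surd>|d|\<close> is the only use of \<open>cnj d = d\<close>.\<close>

lemma signature_congruent_diag_cons:
  assumes R: "R \<in> carrier_mat n n" "signature_congruent n R" and d: "d \<noteq> 0" "cnj d = d"
  shows "signature_congruent (Suc n) (diag_cons (fls_const d) R)"
proof -
  obtain p m U where pm: "p + m = n" and U: "U \<in> carrier_mat n n" "laurent_poly_mat U"
    and RU: "R = U * signature_mat p m * mat_star U"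
    using R(2) unfolding signature_congruent_def by blast
  obtain x :: real where x: "d = of_real x" using d(2) by (metis Reals_cnj_iff Reals_cases)
  define q where "q = fls_const (complex_of_real (sqrt \<bar>x\<bar>))"
  define s where "s = fls_const (if x > 0 then 1 else - 1 :: complex)"
  have qsq: "q * s * fls_star q = fls_const d"
    unfolding q_def s_def x using d(1) x
    by (auto simp: real_sqrt_mult[symmetric] simp flip: of_real_mult)
  have J: "signature_mat p m \<in> carrier_mat n n" using pm by (simp add: signature_mat_def)
  have "diag_cons q U * diag_cons s (signature_mat p m) * mat_star (diag_cons q U)
      = diag_cons (q * s * fls_star q) (U * signature_mat p m * mat_star U)"
    using U J by (simp add: diag_cons_mult[of _ n n _ n] mat_star_diag_cons mult_carrier_mat[of _ n n _ n])
  then have "diag_cons (fls_const d) R = diag_cons q U * diag_cons s (signature_mat p m) * mat_star (diag_cons q U)"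
    by (simp add: qsq RU)
  moreover have "s = 1 \<or> s = - 1" unfolding s_def by simp
  ultimately show ?thesis
    using signature_congruent_mult[of "diag_cons q U" "Suc n" "diag_cons s (signature_mat p m)"]
      signature_congruent_diag_cons_sign[of s p m] U J pm
    by (simp add: q_def)
qed

lemma lp_congruent_pivot_to_front:
  assumes H: "H \<in> carrier_mat n n" and i: "i < n"
  obtains G where "lp_congruent n H G" "G $$ (0, 0) = H $$ (i, i)"
proof -
  let ?p = "Transposition.transpose 0 i"
  have p: "?p permutes {..<n}" by (rule permutes_swap_id) (use i in auto)
  show ?thesis
    by (rule that[OF lp_congruent_perm[OF p]]) (use perm_mat_congruence_index[OF p H] i in simp)
qed

lemma col_comb_congruence_index:
  assumes H: "H \<in> carrier_mat n n" and k: "k < n" and c: "\<And>l. l < n \<Longrightarrow> is_laurent_poly (c l)"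
    and ab: "a < n" "b < n"
  shows "(col_comb_mat n k c * H * mat_star (col_comb_mat n k c)) $$ (a, b)
    = H $$ (a, b) + c a * H $$ (k, b) + (H $$ (a, k) + c a * H $$ (k, k)) * fls_star (c b)"
proof -
  have WH: "col_comb_mat n k c * H \<in> carrier_mat n n"
    using H by (rule mult_carrier_mat[OF col_comb_mat_carrier])
  have "(col_comb_mat n k c * H * mat_star (col_comb_mat n k c)) $$ (a, b)
      = (col_comb_mat n k c * H) $$ (a, b) + (col_comb_mat n k c * H) $$ (a, k) * fls_star (c b)"
    by (rule mult_star_col_comb_mat_index[OF WH ab k c])
  then show ?thesis using col_comb_mat_mult_index[OF H _ _ k] ab k by simp
qed

text \<open>The pivot \<open>d\<close> clears the first column, and by symmetry the first row.\<close>

lemma lp_congruent_split_pivot: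
  assumes H: "H \<in> carrier_mat (Suc n) (Suc n)" "hermite_lp_mat H"
    and H00: "H $$ (0, 0) = fls_const d" and d: "d \<noteq> 0" "cnj d = d"
  obtains R where "R \<in> carrier_mat n n" "lp_congruent (Suc n) H (diag_cons (fls_const d) R)"
proof -
  let ?N = "Suc n"
  have sym: "fls_star (H $$ (b, a)) = H $$ (a, b)" and lp: "is_laurent_poly (H $$ (a, b))"
    if "a < ?N" "b < ?N" for a b
    using hermite_lp_mat_entry[OF H(2,1) that] by auto
  define c where "c l = (if l = 0 then 0 else - H $$ (l, 0) * fls_const (inverse d))" for l
  have c: "\<And>l. l < ?N \<Longrightarrow> is_laurent_poly (c l)" unfolding c_def using lp by auto
  define G where "G = col_comb_mat ?N 0 c * H * mat_star (col_comb_mat ?N 0 c)"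
  have HG: "lp_congruent ?N H G"
    unfolding G_def by (rule lp_congruent_col_comb) (auto simp: c_def lp)
  have Gc: "G \<in> carrier_mat ?N ?N" by (rule lp_congruent_hermitian(1)[OF HG H])
  have G: "G $$ (a, b) = H $$ (a, b) + c a * H $$ (0, b) + (H $$ (a, 0) + c a * H $$ (0, 0)) * fls_star (c b)"
    if "a < ?N" "b < ?N" for a b
    unfolding G_def by (rule col_comb_congruence_index[OF H(1) _ c that]) simp
  have star_c: "fls_star (c b) = - H $$ (0, b) * fls_const (inverse d)" if "b < ?N" "b \<noteq> 0" for b
    using that lp[of b 0] sym[of 0 b] d(2) by (simp add: c_def fls_star_mult fls_star_uminus)
  have G00: "G $$ (0, 0) = fls_const d" by (simp add: G c_def H00)
  have Ga0: "G $$ (a, 0) = 0" if "a < ?N" "a \<noteq> 0" for a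
  proof -
    have "G $$ (a, 0) = H $$ (a, 0) - H $$ (a, 0) * (fls_const (inverse d) * fls_const d)"
      using that by (simp add: G c_def H00 algebra_simps)
    then show ?thesis using d(1) by simp
  qed
  have G0b: "G $$ (0, b) = 0" if "b < ?N" "b \<noteq> 0" for b
  proof -
    have "G $$ (0, b) = H $$ (0, b) - H $$ (0, b) * (fls_const (inverse d) * fls_const d)"
      using that by (simp add: G star_c H00 algebra_simps c_def[of 0])
    then show ?thesis using d(1) by simp
  qed
  define R where "R = mat n n (\<lambda>(a, b). G $$ (Suc a, Suc b))"
  have R: "R \<in> carrier_mat n n" unfolding R_def by simp
  have "G = diag_cons (fls_const d) R"
  proof (rule eq_matI)
    fix a b assume "a < dim_row (diag_cons (fls_const d) R)" "b < dim_col (diag_cons (fls_const d) R)"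
    then have a: "a < ?N" and b: "b < ?N" using R by auto
    show "G $$ (a, b) = diag_cons (fls_const d) R $$ (a, b)"
    proof (cases "a = 0 \<or> b = 0")
      case True
      then show ?thesis using a b R G00 Ga0 G0b by (auto simp: index_diag_cons)
    next
      case False
      then obtain a' b' where "a = Suc a'" "b = Suc b'" by (cases a; cases b) auto
      then show ?thesis using a b R by (auto simp: index_diag_cons R_def)
    qed
  qed (use Gc R in auto)
  with HG R show ?thesis by (intro that) auto
qed

lemma signature_congruent_pivot:
  assumes IH: "\<And>R c. R \<in> carrier_mat n n \<Longrightarrow> hermite_lp_mat R \<Longrightarrow> c \<noteq> 0 \<Longrightarrow>
      det R = fls_const c \<Longrightarrow> signature_congruent n R"
    and H: "H \<in> carrier_mat (Suc n) (Suc n)" "hermite_lp_mat H"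
    and c: "c \<noteq> 0" "det H = fls_const c"
    and G: "lp_congruent (Suc n) H G" and i: "i < Suc n"
    and Gii: "G $$ (i, i) = fls_const d" and d: "d \<noteq> 0" "cnj d = d"
  shows "signature_congruent (Suc n) H"
proof -
  obtain G' where G': "lp_congruent (Suc n) G G'" "G' $$ (0, 0) = fls_const d"
    using lp_congruent_pivot_to_front[of G "Suc n" i] lp_congruent_hermitian[OF G H] i Gii by metis
  have HG': "lp_congruent (Suc n) H G'" by (rule lp_congruent_trans[OF G G'(1) H(1)])
  note hG' = lp_congruent_hermitian[OF HG' H]
  obtain R where R: "R \<in> carrier_mat n n" "lp_congruent (Suc n) G' (diag_cons (fls_const d) R)"
    using lp_congruent_split_pivot[OF hG' G'(2) d] by blast
  have HR: "lp_congruent (Suc n) H (diag_cons (fls_const d) R)"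
    by (rule lp_congruent_trans[OF HG' R(2) H(1)])
  have dR: "fls_const d * det R = fls_const c"
    using det_lp_congruent[OF HR H(1)] c(2) by (simp add: det_diag_cons[OF R(1)])
  have "det R = fls_const (inverse d) * (fls_const d * det R)"
    using d(1) by (simp add: mult.assoc[symmetric])
  also have "\<dots> = fls_const (inverse d * c)" by (simp add: dR)
  finally have "det R = fls_const (inverse d * c)" .
  moreover have "hermite_lp_mat R"
    using lp_congruent_hermitian[OF HR H] R(1) by (auto intro: hermite_lp_mat_diag_consD)
  ultimately have "signature_congruent n R" using IH[OF R(1), of "inverse d * c"] c(1) d(1) by simp
  then have "signature_congruent (Suc n) (diag_cons (fls_const d) R)"
    by (rule signature_congruent_diag_cons[OF R(1) _ d])
  then show ?thesis by (rule signature_congruent_if_lp_congruent[OF HR H(1)])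
qed

definition upper_half :: "complex fls \<Rightarrow> complex fls" where
  "upper_half e = Abs_fls (\<lambda>k. if k > 0 then fls_nth e k else if k = 0 then fls_nth e 0 / 2 else 0)"

lemma fls_nth_upper_half:
  "fls_nth (upper_half e) k = (if k > 0 then fls_nth e k else if k = 0 then fls_nth e 0 / 2 else 0)"
  unfolding upper_half_def by (rule nth_Abs_fls_lower_bound[of 0]) auto

lemma is_laurent_poly_upper_half [simp]:
  assumes "is_laurent_poly e" shows "is_laurent_poly (upper_half e)"
proof -
  obtain N where N: "\<And>k. N < \<bar>k\<bar> \<Longrightarrow> fls_nth e k = 0" using is_laurent_polyE[OF assms] by blast
  show ?thesis by (rule is_laurent_polyI[of N]) (simp add: fls_nth_upper_half N)
qed

lemma upper_half_add_fls_star: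
  assumes e: "is_laurent_poly e" and sym: "fls_star e = e"
  shows "upper_half e + fls_star (upper_half e) = e"
proof (rule fls_eqI)
  fix k
  have conj: "fls_nth e k = cnj (fls_nth e (- k))" for k
    using sym fls_star_nth[OF e, of k] by simp
  then have "cnj (fls_nth e 0 / 2) = fls_nth e 0 / 2" by (metis complex_cnj_divide complex_cnj_numeral minus_zero)
  then show "fls_nth (upper_half e + fls_star (upper_half e)) k = fls_nth e k"
    using conj[of k] by (auto simp: fls_star_nth e fls_nth_upper_half)
qed

lemma single_row_comb_congruence_index:
  fixes j :: nat
  assumes H: "H \<in> carrier_mat N N" and i: "i < N" and x: "is_laurent_poly x"
    and ab: "a < N" "b < N"
  defines "W \<equiv> row_comb_mat N j (\<lambda>l. if l = i then x else 0)"
  shows "(W * H * mat_star W) $$ (a, b) = H $$ (a, b) + (if a = j then x * H $$ (i, b) else 0)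
    + (if b = j then (H $$ (a, i) + (if a = j then x * H $$ (i, i) else 0)) * fls_star x else 0)"
proof -
  let ?r = "\<lambda>l. if l = i then x else 0"
  have r: "\<And>l. l < N \<Longrightarrow> is_laurent_poly (?r l)" using x by simp
  have WH: "(W * H) $$ (a', b') = H $$ (a', b') + (if a' = j then x * H $$ (i, b') else 0)"
    if "a' < N" "b' < N" for a' b'
    unfolding W_def row_comb_mat_mult_index[OF H that] using i
    by (simp add: if_distrib[of "\<lambda>y. y * _"] cong: if_cong)
  have WHc: "W * H \<in> carrier_mat N N"
    using H unfolding W_def by (rule mult_carrier_mat[OF row_comb_mat_carrier])
  have "(W * H * mat_star W) $$ (a, b)
      = (W * H) $$ (a, b) + (if b = j then (\<Sum>l<N. (W * H) $$ (a, l) * fls_star (?r l)) else 0)"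
    unfolding W_def by (rule mult_star_row_comb_mat_index[OF WHc[unfolded W_def] ab r])
  then show ?thesis
    using i ab by (simp add: WH if_distrib[of fls_star] if_distrib[of "\<lambda>y. _ * y"] cong: if_cong)
qed

lemma lp_congruent_single_row_comb:
  assumes "i < N" "j < N" "i \<noteq> j" "is_laurent_poly x"
  shows "lp_congruent N H (row_comb_mat N j (\<lambda>l. if l = i then x else 0) * H
    * mat_star (row_comb_mat N j (\<lambda>l. if l = i then x else 0)))"
  by (rule lp_congruent_row_comb) (use assms in auto)

text \<open>The row operation \<open>j += x \<cdot> i\<close> with \<open>x u = - upper_half (H\<^sub>j\<^sub>j)\<close>, where \<open>u = H\<^sub>i\<^sub>j\<close>,
  makes \<open>H\<^sub>j\<^sub>j\<close> vanish.\<close>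

lemma lp_congruent_zero_diagonal_pair:
  assumes H: "H \<in> carrier_mat N N" "hermite_lp_mat H" and ij: "i < N" "j < N" "i \<noteq> j"
    and Hii: "H $$ (i, i) = 0" and v: "is_laurent_poly v" "v * H $$ (i, j) = 1"
  obtains G where "lp_congruent N H G" "G $$ (i, i) = 0" "G $$ (i, j) = H $$ (i, j)" "G $$ (j, j) = 0"
proof -
  let ?u = "H $$ (i, j)" and ?e = "H $$ (j, j)"
  have lp: "is_laurent_poly (H $$ (a, b))" and sym: "fls_star (H $$ (b, a)) = H $$ (a, b)"
    if "a < N" "b < N" for a b
    using hermite_lp_mat_entry[OF H(2,1) that] by auto
  define x where "x = - upper_half ?e * v"
  have x: "is_laurent_poly x" unfolding x_def using lp[of j j] ij v by simp
  have xu: "x * ?u = - upper_half ?e" unfolding x_def using v by (simp add: mult.assoc)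
  define W where "W = row_comb_mat N j (\<lambda>l. if l = i then x else 0)"
  define G where "G = W * H * mat_star W"
  have HG: "lp_congruent N H G"
    unfolding G_def W_def by (rule lp_congruent_single_row_comb[OF ij x])
  note G = single_row_comb_congruence_index[OF H(1) ij(1) x, where j = j, folded W_def G_def]
  have "G $$ (j, j) = ?e + x * ?u + fls_star ?u * fls_star x"
    using ij by (simp add: G Hii sym[of j i] algebra_simps)
  also have "fls_star ?u * fls_star x = - fls_star (upper_half ?e)"
    using x lp[of i j] lp[of j j] ij xu by (simp add: fls_star_mult[symmetric] mult.commute fls_star_uminus)
  also have "?e + x * ?u + - fls_star (upper_half ?e) = 0"
    using upper_half_add_fls_star[OF lp[of j j] sym[of j j]] ij xu by (simp add: algebra_simps)
  finally have "G $$ (j, j) = 0" .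
  moreover have "G $$ (i, i) = 0" "G $$ (i, j) = ?u" using ij by (simp_all add: G Hii)
  ultimately show ?thesis using HG that by blast
qed

text \<open>With \<open>H\<^sub>i\<^sub>i = H\<^sub>j\<^sub>j = 0\<close> the row operation \<open>i += w \<cdot> j\<close> gives \<open>H\<^sub>i\<^sub>i = w u\<^sup>\<star> + u w\<^sup>\<star>\<close>,
  which is \<open>1\<close> for \<open>w = v\<^sup>\<star>/2\<close>.\<close>

lemma lp_congruent_unit_diagonal_of_pair:
  assumes H: "H \<in> carrier_mat N N" "hermite_lp_mat H" and ij: "i < N" "j < N" "i \<noteq> j"
    and Hii: "H $$ (i, i) = 0" and Hjj: "H $$ (j, j) = 0"
    and v: "is_laurent_poly v" "v * H $$ (i, j) = 1"
  obtains G where "lp_congruent N H G" "G $$ (i, i) = 1"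
proof -
  let ?u = "H $$ (i, j)"
  have lp: "is_laurent_poly ?u" and sym: "fls_star ?u = H $$ (j, i)"
    using hermite_lp_mat_entry[OF H(2,1) ij(2,1)] hermite_lp_mat_entry[OF H(2,1) ij(1,2)] by auto
  define w where "w = fls_const (1 / 2) * fls_star v"
  have w: "is_laurent_poly w" unfolding w_def using v by simp
  have half: "w * fls_star ?u = fls_const (1 / 2)"
    unfolding w_def using v lp by (simp add: mult.assoc fls_star_mult[symmetric])
  define W where "W = row_comb_mat N i (\<lambda>l. if l = j then w else 0)"
  define G where "G = W * H * mat_star W"
  have HG: "lp_congruent N H G"
    unfolding G_def W_def by (rule lp_congruent_single_row_comb[OF ij(2,1) ij(3)[symmetric] w])
  have "G $$ (i, i) = w * fls_star ?u + ?u * fls_star w"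
    unfolding G_def W_def single_row_comb_congruence_index[OF H(1) ij(2) w ij(1) ij(1)]
    using Hii Hjj sym by simp
  also have "\<dots> = w * fls_star ?u + fls_star (w * fls_star ?u)"
    using w lp by (simp add: fls_star_mult mult.commute)
  also have "\<dots> = 1" unfolding half by (simp add: fls_plus_const complex_cnj_divide)
  finally show ?thesis using HG that by blast
qed

lemma lp_congruent_unit_diagonal_of_monomial:
  assumes H: "H \<in> carrier_mat N N" "hermite_lp_mat H" and ij: "i < N" "j < N" "i \<noteq> j"
    and Hii: "H $$ (i, i) = 0" and Hij: "H $$ (i, j) = fls_const a * fls_X_intpow t" and a: "a \<noteq> 0"
  obtains G where "lp_congruent N H G" "G $$ (i, i) = 1"
proof -
  define v where "v = fls_const (inverse a) * fls_X_intpow (- t)"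
  have v: "is_laurent_poly v" "v * H $$ (i, j) = 1"
  proof -
    have "v * H $$ (i, j) = fls_const (inverse a * a) * fls_X_intpow (- t + t)"
      unfolding v_def Hij
      by (simp only: mult_ac fls_const_mult_const[symmetric] fls_X_intpow_times_fls_X_intpow[symmetric])
    then show "v * H $$ (i, j) = 1" using a by simp
  qed (simp add: v_def)
  obtain G where G: "lp_congruent N H G" "G $$ (i, i) = 0" "G $$ (i, j) = H $$ (i, j)" "G $$ (j, j) = 0"
    using lp_congruent_zero_diagonal_pair[OF H ij Hii v] by blast
  note hG = lp_congruent_hermitian[OF G(1) H]
  obtain K where K: "lp_congruent N G K" "K $$ (i, i) = 1"
    using lp_congruent_unit_diagonal_of_pair[OF hG ij G(2,4)] v G(3) by metis
  show ?thesis by (rule that[OF lp_congruent_trans[OF G(1) K(1) H(1)] K(2)])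
qed

definition fls_deg_le :: "'a::zero fls \<Rightarrow> int \<Rightarrow> bool" where
  "fls_deg_le f a \<longleftrightarrow> (\<forall>e>a. fls_nth f e = 0)"

lemma fls_deg_leD: "fls_deg_le f a \<Longrightarrow> e > a \<Longrightarrow> fls_nth f e = 0"
  unfolding fls_deg_le_def by auto

lemma fls_deg_le_mono: "fls_deg_le f a \<Longrightarrow> a \<le> b \<Longrightarrow> fls_deg_le f b"
  and fls_deg_le_add: "fls_deg_le f a \<Longrightarrow> fls_deg_le g a \<Longrightarrow> fls_deg_le (f + g) a"
  and fls_deg_le_0 [simp]: "fls_deg_le 0 a"
  unfolding fls_deg_le_def by auto

lemma fls_deg_le_const_X_intpow: "fls_deg_le (fls_const (c :: 'a::comm_ring_1) * fls_X_intpow s) s"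
  unfolding fls_deg_le_def by simp

lemma fls_deg_le_sum: "(\<And>x. x \<in> A \<Longrightarrow> fls_deg_le (f x) a) \<Longrightarrow> fls_deg_le (\<Sum>x\<in>A. f x) a"
  unfolding fls_deg_le_def by (auto simp: fls_nth_sum intro!: sum.neutral)

lemma fls_deg_le_mult:
  fixes f g :: "'a::comm_ring_1 fls"
  assumes f: "fls_deg_le f a" and g: "fls_deg_le g b"
  shows "fls_deg_le (f * g) (a + b)" "fls_nth (f * g) (a + b) = fls_nth f a * fls_nth g b"
proof -
  have below: "i \<le> a" "e - i \<le> b" if "fls_nth f i \<noteq> 0" "fls_nth g (e - i) \<noteq> 0" for e i
    using that fls_deg_leD[OF f] fls_deg_leD[OF g] by (meson not_le)+
  show "fls_deg_le (f * g) (a + b)" unfolding fls_deg_le_def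
  proof (intro allI impI)
    fix e assume "e > a + b"
    then have "fls_nth (f * g) e = (\<Sum>i\<in>{}. fls_nth f i * fls_nth g (e - i))"
      using below by (intro fls_times_nth_eq_sum) force+
    then show "fls_nth (f * g) e = 0" by simp
  qed
  have "fls_nth (f * g) (a + b) = (\<Sum>i\<in>{a}. fls_nth f i * fls_nth g (a + b - i))"
    using below by (intro fls_times_nth_eq_sum) force+
  then show "fls_nth (f * g) (a + b) = fls_nth f a * fls_nth g b" by simp
qed

lemma fls_deg_le_prod:
  fixes f :: "'b \<Rightarrow> 'a::comm_ring_1 fls"
  assumes "finite I" and "\<And>i. i \<in> I \<Longrightarrow> fls_deg_le (f i) (a i)"
  shows "fls_deg_le (\<Prod>i\<in>I. f i) (\<Sum>i\<in>I. a i) \<and>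
    fls_nth (\<Prod>i\<in>I. f i) (\<Sum>i\<in>I. a i) = (\<Prod>i\<in>I. fls_nth (f i) (a i))"
  using assms
proof (induction I rule: finite_induct)
  case empty
  then show ?case unfolding fls_deg_le_def by simp
next
  case (insert x F)
  then have "fls_deg_le (f x) (a x)" "fls_deg_le (\<Prod>i\<in>F. f i) (\<Sum>i\<in>F. a i)"
    "fls_nth (\<Prod>i\<in>F. f i) (\<Sum>i\<in>F. a i) = (\<Prod>i\<in>F. fls_nth (f i) (a i))"
    by auto
  then show ?case using insert fls_deg_le_mult[of "f x" "a x"] by simp
qed

lemma fls_nth_const_X_intpow_mult:
  "fls_nth (fls_const c * fls_X_intpow s * (f :: 'a::comm_ring_1 fls)) e = c * fls_nth f (e - s)"
proof -
  have "fls_const c * fls_X_intpow s * f = fls_const c * fls_shift (- s) f"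
    by (simp only: mult.assoc fls_X_intpow_times_conv_shift(1))
  then show ?thesis by simp
qed

definition row_deg_bounds :: "nat \<Rightarrow> complex fls mat \<Rightarrow> (nat \<Rightarrow> int) \<Rightarrow> bool" where
  "row_deg_bounds N H \<tau> \<longleftrightarrow> (\<forall>i<N. \<forall>j<N. fls_deg_le (H $$ (i, j)) (\<tau> i))"

definition leading_coeff_mat :: "nat \<Rightarrow> complex fls mat \<Rightarrow> (nat \<Rightarrow> int) \<Rightarrow> complex mat" where
  "leading_coeff_mat N H \<tau> = mat N N (\<lambda>(i, j). fls_nth (H $$ (i, j)) (\<tau> i))"

lemma row_deg_boundsD: "row_deg_bounds N H \<tau> \<Longrightarrow> i < N \<Longrightarrow> j < N \<Longrightarrow> e > \<tau> i \<Longrightarrow> fls_nth (H $$ (i, j)) e = 0"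
  unfolding row_deg_bounds_def by (auto dest: fls_deg_leD)

lemma row_deg_bounds_exist:
  assumes "laurent_poly_mat H" "H \<in> carrier_mat N N"
  obtains B where "row_deg_bounds N H (\<lambda>_. B)"
proof -
  have "\<exists>B. \<forall>e. B < \<bar>e\<bar> \<longrightarrow> fls_nth (H $$ (i, j)) e = 0" if "i < N" "j < N" for i j
    using laurent_poly_matD[OF assms(1)] assms(2) that is_laurent_poly_iff_bounded by auto
  then obtain B where B: "\<And>i j e. i < N \<Longrightarrow> j < N \<Longrightarrow> B i j < \<bar>e\<bar> \<Longrightarrow> fls_nth (H $$ (i, j)) e = 0"
    by metis
  define M where "M = Max (insert 0 ((\<lambda>(i, j). \<bar>B i j\<bar>) ` ({..<N} \<times> {..<N})))"
  have M: "\<bar>B i j\<bar> \<le> M" if "i < N" "j < N" for i j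
    unfolding M_def using that by (intro Max_ge) auto
  have "row_deg_bounds N H (\<lambda>_. M)"
    unfolding row_deg_bounds_def fls_deg_le_def
  proof (intro allI impI)
    fix i j e assume "i < N" "j < N" "M < e"
    moreover from this have "B i j < \<bar>e\<bar>" using M[of i j] by linarith
    ultimately show "fls_nth (H $$ (i, j)) e = 0" using B by blast
  qed
  then show ?thesis by (rule that)
qed

lemma det_row_deg_bounds:
  assumes H: "H \<in> carrier_mat N N" and t: "row_deg_bounds N H \<tau>"
  shows "fls_deg_le (det H) (\<Sum>i<N. \<tau> i)"
    "fls_nth (det H) (\<Sum>i<N. \<tau> i) = det (leading_coeff_mat N H \<tau>)"
proof -
  let ?S = "{p. p permutes {0..<N}}"
  have summand: "fls_deg_le (\<Prod>i=0..<N. H $$ (i, p i)) (\<Sum>i<N. \<tau> i) \<and>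
      fls_nth (\<Prod>i=0..<N. H $$ (i, p i)) (\<Sum>i<N. \<tau> i) = (\<Prod>i=0..<N. fls_nth (H $$ (i, p i)) (\<tau> i))"
    if p: "p \<in> ?S" for p
  proof -
    have "fls_deg_le (H $$ (i, p i)) (\<tau> i)" if "i \<in> {0..<N}" for i
      using t that p unfolding row_deg_bounds_def by (auto simp: permutes_in_image)
    from fls_deg_le_prod[of "{0..<N}", OF _ this] show ?thesis by (simp add: atLeast0LessThan)
  qed
  have dH: "det H = (\<Sum>p\<in>?S. of_int (sign p) * (\<Prod>i=0..<N. H $$ (i, p i)))" by (rule det_def'[OF H])
  have nth_term: "fls_nth (of_int z * f) e = of_int z * fls_nth f e" for z and f :: "complex fls" and e
    by (metis fls_mult_const_nth(1) fls_of_int)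
  show "fls_deg_le (det H) (\<Sum>i<N. \<tau> i)"
    unfolding fls_deg_le_def dH fls_nth_sum nth_term
  proof (intro allI impI sum.neutral ballI)
    fix e p assume "e > (\<Sum>i<N. \<tau> i)" "p \<in> ?S"
    then show "of_int (sign p) * fls_nth (\<Prod>i=0..<N. H $$ (i, p i)) e = 0"
      using fls_deg_leD[OF conjunct1[OF summand]] by simp
  qed
  have "fls_nth (det H) (\<Sum>i<N. \<tau> i) = (\<Sum>p\<in>?S. of_int (sign p) * (\<Prod>i=0..<N. fls_nth (H $$ (i, p i)) (\<tau> i)))"
    unfolding dH fls_nth_sum nth_term using summand by (auto intro!: sum.cong)
  also have "\<dots> = det (leading_coeff_mat N H \<tau>)"
    by (subst det_def'[of _ N]) (auto simp: leading_coeff_mat_def permutes_in_image intro!: sum.cong prod.cong)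
  finally show "fls_nth (det H) (\<Sum>i<N. \<tau> i) = det (leading_coeff_mat N H \<tau>)" .
qed

lemma sum_row_deg_bounds_nonneg:
  assumes "H \<in> carrier_mat N N" "row_deg_bounds N H \<tau>" "det H = fls_const c" "c \<noteq> 0"
  shows "(\<Sum>i<N. \<tau> i) \<ge> 0"
  using fls_deg_leD[OF det_row_deg_bounds(1)[OF assms(1,2)], of 0] assms(3,4) by force

lemma hermitian_nth_below_bound:
  assumes H: "H \<in> carrier_mat N N" "hermite_lp_mat H" and t: "row_deg_bounds N H \<tau>"
    and ab: "a < N" "b < N" and e: "- e > \<tau> b"
  shows "fls_nth (H $$ (a, b)) e = 0"
proof -
  have "fls_nth (H $$ (a, b)) e = fls_nth (fls_star (H $$ (b, a))) e"
    using hermite_lp_mat_entry(1)[OF H(2,1) ab] by simp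
  also have "\<dots> = cnj (fls_nth (H $$ (b, a)) (- e))"
    using hermite_lp_mat_entry(2)[OF H(2,1) ab(2,1)] by (rule fls_star_nth)
  finally show ?thesis using row_deg_boundsD[OF t ab(2,1) e] by simp
qed

lemma leading_coeff_kernel:
  assumes H: "H \<in> carrier_mat N N" and t: "row_deg_bounds N H \<tau>"
    and dH: "det H = fls_const c" and pos: "(\<Sum>i<N. \<tau> i) > 0"
  obtains k w where "k < N" "w k \<noteq> 0" "\<And>l. l < N \<Longrightarrow> w l \<noteq> 0 \<Longrightarrow> \<tau> l \<le> \<tau> k"
    "\<And>j. j < N \<Longrightarrow> (\<Sum>i<N. w i * fls_nth (H $$ (i, j)) (\<tau> i)) = 0"
proof -
  let ?T = "leading_coeff_mat N H \<tau>"
  have T: "?T \<in> carrier_mat N N" unfolding leading_coeff_mat_def by simp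
  have "det ?T = 0" using det_row_deg_bounds(2)[OF H t] dH pos by simp
  then have "det (transpose_mat ?T) = 0" using det_transpose[OF T] by simp
  then obtain v where v: "v \<in> carrier_vec N" "v \<noteq> 0\<^sub>v N" "transpose_mat ?T *\<^sub>v v = 0\<^sub>v N"
    using det_0_iff_vec_prod_zero[of "transpose_mat ?T" N] T by auto
  have kernel: "(\<Sum>i<N. v $ i * fls_nth (H $$ (i, j)) (\<tau> i)) = 0" if j: "j < N" for j
  proof -
    have "(transpose_mat ?T *\<^sub>v v) $ j = (\<Sum>i<N. fls_nth (H $$ (i, j)) (\<tau> i) * v $ i)"
      using j v(1) T by (auto simp: scalar_prod_def leading_coeff_mat_def atLeast0LessThan intro!: sum.cong)
    then show ?thesis using v(3) j by (simp add: mult.commute)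
  qed
  define S where "S = {i. i < N \<and> v $ i \<noteq> 0}"
  obtain k0 where "k0 < N" "v $ k0 \<noteq> 0"
    using v(1,2) by (metis carrier_vecD eq_vecI index_zero_vec(1,2))
  then have "S \<noteq> {}" unfolding S_def by auto
  then obtain k where k: "k \<in> S" "\<tau> k = Max (\<tau> ` S)"
    using Max_in[of "\<tau> ` S"] unfolding S_def by fastforce
  have "\<tau> l \<le> \<tau> k" if "l < N" "v $ l \<noteq> 0" for l
    using k that unfolding S_def by simp
  with k kernel show ?thesis by (intro that[of k "\<lambda>i. v $ i"]) (auto simp: S_def)
qed

text \<open>Adding to row \<open>k\<close> the rows \<open>l\<close> weighted by \<open>(w\<^sub>l / w\<^sub>k) z^(\<tau>\<^sub>k - \<tau>\<^sub>l)\<close> kills the coefficient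
  of \<open>z^\<tau>\<^sub>k\<close> in row \<open>k\<close>, and the maximality of \<open>\<tau>\<^sub>k\<close> on the support of \<open>w\<close> keeps higher powers out.\<close>

lemma row_comb_lowers_row_deg:
  assumes H: "H \<in> carrier_mat N N" and t: "row_deg_bounds N H \<tau>"
    and k: "k < N" "w k \<noteq> 0" and max: "\<And>l. l < N \<Longrightarrow> w l \<noteq> 0 \<Longrightarrow> \<tau> l \<le> \<tau> k"
    and kernel: "\<And>j. j < N \<Longrightarrow> (\<Sum>i<N. w i * fls_nth (H $$ (i, j)) (\<tau> i)) = 0"
    and r: "r = (\<lambda>l. if l = k then 0 else fls_const (w l / w k) * fls_X_intpow (\<tau> k - \<tau> l))"
    and b: "b < N"
  shows "fls_deg_le ((row_comb_mat N k r * H) $$ (k, b)) (\<tau> k - 1)"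
proof -
  define g where "g e = (\<Sum>l<N. w l * fls_nth (H $$ (l, b)) (e - (\<tau> k - \<tau> l)))" for e
  have summand: "fls_nth (r l * H $$ (l, b)) e
      = (if l = k then 0 else w l / w k * fls_nth (H $$ (l, b)) (e - (\<tau> k - \<tau> l)))" for l e
  proof (cases "l = k")
    case False
    then have "r l = fls_const (w l / w k) * fls_X_intpow (\<tau> k - \<tau> l)" by (simp add: r)
    then show ?thesis using False by (simp only: fls_nth_const_X_intpow_mult if_False)
  qed (simp add: r)
  have "g e / w k = (\<Sum>l<N. w l / w k * fls_nth (H $$ (l, b)) (e - (\<tau> k - \<tau> l)))" for e
    unfolding g_def by (simp add: sum_divide_distrib)
  also have "\<dots> e = fls_nth (H $$ (k, b)) e
      + (\<Sum>l<N. if l = k then 0 else w l / w k * fls_nth (H $$ (l, b)) (e - (\<tau> k - \<tau> l)))" for e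
    using k by (simp add: sum.remove[of "{..<N}" k] sum.If_cases Diff_eq)
  also have "\<dots> e = fls_nth ((row_comb_mat N k r * H) $$ (k, b)) e" for e
    by (simp add: row_comb_mat_mult_index[OF H k(1) b] fls_nth_sum summand)
  finally have nth: "fls_nth ((row_comb_mat N k r * H) $$ (k, b)) e = g e / w k" for e ..
  have g_top: "g (\<tau> k) = 0" unfolding g_def using kernel[OF b] by simp
  have g_above: "g e = 0" if "e > \<tau> k" for e
    unfolding g_def
    using that max b by (intro sum.neutral ballI) (auto intro!: row_deg_boundsD[OF t] simp: not_le)
  show ?thesis unfolding fls_deg_le_def nth
  proof (intro allI impI)
    fix e assume "e > \<tau> k - 1"
    then have "e = \<tau> k \<or> e > \<tau> k" by linarith
    then show "g e / w k = 0" using g_top g_above by auto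
  qed
qed

lemma row_deg_bounds_row_comb_congruence:
  assumes H: "H \<in> carrier_mat N N" and t: "row_deg_bounds N H \<tau>" and k: "k < N"
    and r: "\<And>l. l < N \<Longrightarrow> is_laurent_poly (r l)" "\<And>l. l < N \<Longrightarrow> fls_deg_le (fls_star (r l)) 0"
    and row_k: "\<And>b. b < N \<Longrightarrow> fls_deg_le ((row_comb_mat N k r * H) $$ (k, b)) (\<tau> k - 1)"
  shows "row_deg_bounds N (row_comb_mat N k r * H * mat_star (row_comb_mat N k r)) (\<tau>(k := \<tau> k - 1))"
proof -
  let ?W = "row_comb_mat N k r" and ?\<tau> = "\<tau>(k := \<tau> k - 1)"
  have WH: "?W * H \<in> carrier_mat N N" using H by (rule mult_carrier_mat[OF row_comb_mat_carrier])
  have rows: "fls_deg_le ((?W * H) $$ (a, b)) (?\<tau> a)" if "a < N" "b < N" for a b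
    using row_k[OF that(2)] t that row_comb_mat_mult_index[OF H that, of k r]
    by (cases "a = k") (auto simp: row_deg_bounds_def)
  show ?thesis unfolding row_deg_bounds_def
  proof (intro allI impI)
    fix a b assume ab: "a < N" "b < N"
    define t where "t = ?\<tau> a"
    have row_a: "fls_deg_le ((?W * H) $$ (a, l)) t" if "l < N" for l
      unfolding t_def by (rule rows[OF ab(1) that])
    have "fls_deg_le ((?W * H) $$ (a, l) * fls_star (r l)) t" if "l < N" for l
      using fls_deg_le_mult(1)[OF row_a[OF that] r(2)[OF that]] by simp
    then have "fls_deg_le ((?W * H) $$ (a, b)
        + (if b = k then (\<Sum>l<N. (?W * H) $$ (a, l) * fls_star (r l)) else 0)) t"
      using row_a[OF ab(2)] by (auto intro!: fls_deg_le_add fls_deg_le_sum)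
    also have "(?W * H) $$ (a, b) + (if b = k then (\<Sum>l<N. (?W * H) $$ (a, l) * fls_star (r l)) else 0)
        = (?W * H * mat_star ?W) $$ (a, b)"
      by (rule mult_star_row_comb_mat_index[OF WH ab r(1), symmetric])
    finally show "fls_deg_le ((?W * H * mat_star ?W) $$ (a, b)) (?\<tau> a)" unfolding t_def .
  qed
qed

lemma row_deg_bounds_reduce:
  assumes H: "H \<in> carrier_mat N N" and t: "row_deg_bounds N H \<tau>"
    and dH: "det H = fls_const c" and pos: "(\<Sum>i<N. \<tau> i) > 0"
  obtains G \<tau>' where "lp_congruent N H G" "row_deg_bounds N G \<tau>'" "(\<Sum>i<N. \<tau>' i) < (\<Sum>i<N. \<tau> i)"
proof (rule leading_coeff_kernel[OF H t dH pos])
  fix k w assume k: "k < N" "w k \<noteq> 0" and max: "\<And>l. l < N \<Longrightarrow> w l \<noteq> 0 \<Longrightarrow> \<tau> l \<le> \<tau> k"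
    and kernel: "\<And>j. j < N \<Longrightarrow> (\<Sum>i<N. w i * fls_nth (H $$ (i, j)) (\<tau> i)) = 0"
  define r where "r = (\<lambda>l. if l = k then 0 else fls_const (w l / w k) * fls_X_intpow (\<tau> k - \<tau> l))"
  have r: "\<And>l. l < N \<Longrightarrow> is_laurent_poly (r l)" unfolding r_def by simp
  have r_deg: "fls_deg_le (fls_star (r l)) 0" if "l < N" for l
  proof (cases "l = k \<or> w l = 0")
    case False
    then have "fls_star (r l) = fls_const (cnj (w l / w k)) * fls_X_intpow (\<tau> l - \<tau> k)"
      unfolding r_def by (simp add: fls_star_mult)
    then have "fls_deg_le (fls_star (r l)) (\<tau> l - \<tau> k)" by (simp only: fls_deg_le_const_X_intpow)
    then show ?thesis by (rule fls_deg_le_mono) (use max[OF that] False in simp)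
  qed (auto simp: r_def)
  let ?W = "row_comb_mat N k r"
  have "lp_congruent N H (?W * H * mat_star ?W)"
    by (rule lp_congruent_row_comb[OF k(1) _ r]) (simp add: r_def)
  moreover have "row_deg_bounds N (?W * H * mat_star ?W) (\<tau>(k := \<tau> k - 1))"
    using row_comb_lowers_row_deg[OF H t k max kernel r_def]
    by (intro row_deg_bounds_row_comb_congruence[OF H t k(1) r r_deg])
  moreover have "(\<Sum>i<N. (\<tau>(k := \<tau> k - 1)) i) < (\<Sum>i<N. \<tau> i)"
    using k(1) by (simp add: sum.remove[of "{..<N}" k])
  ultimately show thesis by (rule that)
qed

lemma lp_congruent_degree_zero:
  assumes "H \<in> carrier_mat N N" "hermite_lp_mat H" "row_deg_bounds N H \<tau>"
    and "det H = fls_const c" "c \<noteq> 0"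
  shows "\<exists>G \<tau>'. lp_congruent N H G \<and> row_deg_bounds N G \<tau>' \<and> (\<Sum>i<N. \<tau>' i) = 0"
  using assms
proof (induction "nat (\<Sum>i<N. \<tau> i)" arbitrary: H \<tau> rule: less_induct)
  case less
  note H = less.prems(1,2) and t = less.prems(3) and dH = less.prems(4,5)
  have nonneg: "(\<Sum>i<N. \<tau> i) \<ge> 0" by (rule sum_row_deg_bounds_nonneg[OF H(1) t dH])
  show ?case
  proof (cases "(\<Sum>i<N. \<tau> i) = 0")
    case True
    then show ?thesis using lp_congruent_refl[OF H(1)] t by blast
  next
    case False
    with nonneg have "(\<Sum>i<N. \<tau> i) > 0" by simp
    then obtain G \<tau>' where G: "lp_congruent N H G" "row_deg_bounds N G \<tau>'"
      and less_sum: "(\<Sum>i<N. \<tau>' i) < (\<Sum>i<N. \<tau> i)"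
      by (rule row_deg_bounds_reduce[OF H(1) t dH(1)])
    note hG = lp_congruent_hermitian[OF G(1) H]
    have dG: "det G = fls_const c" using det_lp_congruent[OF G(1) H(1)] dH(1) by simp
    have "nat (\<Sum>i<N. \<tau>' i) < nat (\<Sum>i<N. \<tau> i)"
      using less_sum sum_row_deg_bounds_nonneg[OF hG(1) G(2) dG dH(2)] by linarith
    then obtain K \<tau>'' where "lp_congruent N G K" "row_deg_bounds N K \<tau>''" "(\<Sum>i<N. \<tau>'' i) = 0"
      using less.hyps[OF _ hG G(2) dG dH(2)] by blast
    then show ?thesis using lp_congruent_trans[OF G(1) _ H(1)] by blast
  qed
qed

lemma leading_matching:
  assumes H: "H \<in> carrier_mat N N" and t: "row_deg_bounds N H \<tau>" and s0: "(\<Sum>i<N. \<tau> i) = 0"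
    and dH: "det H = fls_const c" "c \<noteq> 0"
  shows "\<exists>p. p permutes {..<N} \<and> (\<forall>i<N. fls_nth (H $$ (i, p i)) (\<tau> i) \<noteq> 0)"
proof -
  let ?T = "leading_coeff_mat N H \<tau>"
  have T: "?T \<in> carrier_mat N N" unfolding leading_coeff_mat_def by simp
  have "det ?T = c" using det_row_deg_bounds(2)[OF H t] s0 dH(1) by simp
  then have "(\<Sum>p | p permutes {0..<N}. of_int (sign p) * (\<Prod>i = 0..<N. ?T $$ (i, p i))) \<noteq> 0"
    using dH(2) det_def'[OF T] by simp
  then obtain p where p: "p permutes {0..<N}" and "(\<Prod>i = 0..<N. ?T $$ (i, p i)) \<noteq> 0"
    by (rule sum.not_neutral_contains_not_neutral) auto
  then have "fls_nth (H $$ (i, p i)) (\<tau> i) \<noteq> 0" if "i < N" for i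
    using that permutes_in_image[OF p, of i] by (auto simp: leading_coeff_mat_def prod_zero_iff)
  with p show ?thesis by (auto simp: atLeast0LessThan)
qed

lemma hermitian_entry_monomial:
  assumes H: "H \<in> carrier_mat N N" "hermite_lp_mat H" and t: "row_deg_bounds N H \<tau>"
    and ab: "a < N" "b < N" and opp: "\<tau> b = - \<tau> a"
  shows "H $$ (a, b) = fls_const (fls_nth (H $$ (a, b)) (\<tau> a)) * fls_X_intpow (\<tau> a)"
proof (rule fls_eq_monomial)
  fix e assume "e \<noteq> \<tau> a"
  then consider "e > \<tau> a" | "- e > \<tau> b" using opp by linarith
  then show "fls_nth (H $$ (a, b)) e = 0"
    by cases (use row_deg_boundsD[OF t ab] hermitian_nth_below_bound[OF H t ab] in auto)
qed

lemma hermitian_diagonal_zero: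
  assumes H: "H \<in> carrier_mat N N" "hermite_lp_mat H" and t: "row_deg_bounds N H \<tau>"
    and i: "i < N" and neg: "\<tau> i < 0"
  shows "H $$ (i, i) = 0"
proof (rule fls_eqI)
  fix e
  have "e > \<tau> i \<or> - e > \<tau> i" using neg by linarith
  then show "fls_nth (H $$ (i, i)) e = fls_nth 0 e"
    using row_deg_boundsD[OF t i i] hermitian_nth_below_bound[OF H t i i] by auto
qed

lemma hermitian_const_diagonal_real:
  assumes "H \<in> carrier_mat N N" "hermite_lp_mat H" "i < N" "H $$ (i, i) = fls_const d"
  shows "cnj d = d"
proof -
  have "fls_const (cnj d) = fls_const d"
    using hermite_lp_mat_entry(1)[OF assms(2,1,3,3)] assms(4) by simp
  then show ?thesis by (metis fls_const_nth)
qed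

lemma matching_bounds_opposite:
  assumes H: "H \<in> carrier_mat N N" "hermite_lp_mat H" and t: "row_deg_bounds N H \<tau>"
    and s0: "(\<Sum>i<N. \<tau> i) = 0" and p: "p permutes {..<N}"
    and nz: "\<And>i. i < N \<Longrightarrow> fls_nth (H $$ (i, p i)) (\<tau> i) \<noteq> 0" and i: "i < N"
  shows "\<tau> (p i) = - \<tau> i"
proof -
  have pN: "p i < N" if "i < N" for i using permutes_in_image[OF p] that by simp
  have nonneg: "\<tau> i + \<tau> (p i) \<ge> 0" if "i < N" for i
    using hermitian_nth_below_bound[OF H t that pN[OF that], of "\<tau> i"] nz[OF that] by force
  have "(\<Sum>i<N. \<tau> i + \<tau> (p i)) = (\<Sum>i<N. \<tau> i) + (\<Sum>i<N. \<tau> (p i))" by (rule sum.distrib)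
  also have "(\<Sum>i<N. \<tau> (p i)) = (\<Sum>i<N. \<tau> i)" using sum.permute[OF p, of \<tau>] by (simp add: comp_def)
  finally have "(\<Sum>i<N. \<tau> i + \<tau> (p i)) = 0" using s0 by simp
  then have "\<tau> i + \<tau> (p i) = 0"
    using sum_nonneg_eq_0_iff[of "{..<N}" "\<lambda>i. \<tau> i + \<tau> (p i)"] nonneg i by auto
  then show ?thesis by simp
qed

lemma lp_congruent_unit_diagonal_of_matching:
  assumes G: "G \<in> carrier_mat N N" "hermite_lp_mat G" and t: "row_deg_bounds N G \<tau>"
    and s0: "(\<Sum>i<N. \<tau> i) = 0" and p: "p permutes {..<N}"
    and nz: "\<And>i. i < N \<Longrightarrow> fls_nth (G $$ (i, p i)) (\<tau> i) \<noteq> 0"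
    and i: "i < N" and Gii: "G $$ (i, i) = 0"
  obtains K where "lp_congruent N G K" "K $$ (i, i) = 1"
proof -
  have pi: "p i < N" using permutes_in_image[OF p] i by simp
  have ipi: "i \<noteq> p i"
  proof
    assume "i = p i"
    with nz[OF i] Gii show False by simp
  qed
  have "G $$ (i, p i) = fls_const (fls_nth (G $$ (i, p i)) (\<tau> i)) * fls_X_intpow (\<tau> i)"
    by (rule hermitian_entry_monomial[OF G t i pi matching_bounds_opposite[OF G t s0 p nz i]])
  then show ?thesis
    by (rule lp_congruent_unit_diagonal_of_monomial[OF G i pi ipi Gii _ nz[OF i]]) (rule that)
qed

text \<open>If no diagonal entry vanishes, no bound \<open>\<tau>\<^sub>i\<close> can be negative, so all vanish and
  the entries are constants.\<close>

lemma const_diagonal_of_degree_zero: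
  assumes G: "G \<in> carrier_mat N N" "hermite_lp_mat G" and t: "row_deg_bounds N G \<tau>"
    and s0: "(\<Sum>i<N. \<tau> i) = 0" and i: "i < N" and nonzero: "\<And>i. i < N \<Longrightarrow> G $$ (i, i) \<noteq> 0"
  obtains d where "G $$ (i, i) = fls_const d" "d \<noteq> 0"
proof -
  have "\<tau> l \<ge> 0" if "l < N" for l
    using hermitian_diagonal_zero[OF G t that] nonzero[OF that] by (meson not_le)
  then have \<tau>i: "\<tau> i = 0" using s0 i sum_nonneg_eq_0_iff[of "{..<N}" \<tau>] by auto
  have "G $$ (i, i) = fls_const (fls_nth (G $$ (i, i)) (\<tau> i)) * fls_X_intpow (\<tau> i)"
    by (rule hermitian_entry_monomial[OF G t i i]) (simp add: \<tau>i)
  also have "\<dots> = fls_const (fls_nth (G $$ (i, i)) 0)" by (simp add: \<tau>i)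
  finally have Gii: "G $$ (i, i) = fls_const (fls_nth (G $$ (i, i)) 0)" .
  moreover have "fls_nth (G $$ (i, i)) 0 \<noteq> 0"
  proof
    assume "fls_nth (G $$ (i, i)) 0 = 0"
    then have "G $$ (i, i) = 0" by (subst Gii) simp
    with nonzero[OF i] show False by blast
  qed
  ultimately show ?thesis by (rule that)
qed

lemma exists_lp_congruent_real_pivot:
  assumes H: "H \<in> carrier_mat N N" "hermite_lp_mat H" and N: "N > 0"
    and dH: "det H = fls_const c" "c \<noteq> 0"
  obtains G i d where "lp_congruent N H G" "i < N" "G $$ (i, i) = fls_const d" "d \<noteq> 0" "cnj d = d"
proof -
  have "laurent_poly_mat H" using H(2) unfolding hermite_lp_mat_def by simp
  then obtain B where "row_deg_bounds N H (\<lambda>_. B)" by (rule row_deg_bounds_exist[OF _ H(1)])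
  then obtain G \<tau> where G: "lp_congruent N H G" and t: "row_deg_bounds N G \<tau>" and s0: "(\<Sum>i<N. \<tau> i) = 0"
    using lp_congruent_degree_zero[OF H _ dH] by blast
  note hG = lp_congruent_hermitian[OF G H]
  have dG: "det G = fls_const c" using det_lp_congruent[OF G H(1)] dH(1) by simp
  obtain p where p: "p permutes {..<N}" and nz: "\<And>i. i < N \<Longrightarrow> fls_nth (G $$ (i, p i)) (\<tau> i) \<noteq> 0"
    using leading_matching[OF hG(1) t s0 dG dH(2)] by blast
  show ?thesis
  proof (cases "\<exists>i<N. G $$ (i, i) = 0")
    case True
    then obtain i where i: "i < N" and Gii: "G $$ (i, i) = 0" by blast
    obtain K where K: "lp_congruent N G K" "K $$ (i, i) = 1"
      using lp_congruent_unit_diagonal_of_matching[OF hG t s0 p nz i Gii] by blast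
    show ?thesis
      by (rule that[OF lp_congruent_trans[OF G K(1) H(1)] i, of 1]) (simp_all add: K(2))
  next
    case False
    then obtain d where "G $$ (0, 0) = fls_const d" "d \<noteq> 0"
      using const_diagonal_of_degree_zero[OF hG t s0 N] by blast
    with that[OF G N] show ?thesis using hermitian_const_diagonal_real[OF hG N] by blast
  qed
qed

lemma signature_congruent_of_const_det:
  assumes "H \<in> carrier_mat n n" "hermite_lp_mat H" "c \<noteq> 0" "det H = fls_const c"
  shows "signature_congruent n H"
  using assms
proof (induction n arbitrary: H c)
  case 0
  then have "H = signature_mat 0 0" by (intro eq_matI) auto
  then show ?case using signature_congruent_signature_mat[of 0 0] by simp
next
  case (Suc n)
  obtain G i d where G: "lp_congruent (Suc n) H G" "i < Suc n" "G $$ (i, i) = fls_const d" "d \<noteq> 0" "cnj d = d"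
    by (rule exists_lp_congruent_real_pivot[OF Suc.prems(1,2) _ Suc.prems(4,3)]) simp
  show ?case by (rule signature_congruent_pivot[OF Suc.IH Suc.prems G])
qed

lemma hermitian_det_monomial_is_const:
  assumes A: "A \<in> carrier_mat n n" "hermite_lp_mat A"
    and c: "c \<noteq> 0" and dA: "det A = fls_const c * fls_X_intpow k"
  shows "k = 0"
proof (rule ccontr)
  assume "k \<noteq> 0"
  have "fls_star (det A) = det A"
    using det_mat_star[OF A(1)] A(2) unfolding hermite_lp_mat_def by simp
  then have "fls_nth (det A) k = cnj (fls_nth (det A) (- k))"
    using fls_star_nth[of "det A" k] dA by simp
  with \<open>k \<noteq> 0\<close> c dA show False by simp
qed

theorem theorem4p1:
  fixes n :: nat and A :: "complex fls mat"
  assumes "A \<in> carrier_mat n n"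
    and "hermite_lp_mat A"
    and "c \<noteq> 0"
    and "det A = fls_const c * fls_X_intpow k"
  shows "\<exists>p m U. p + m = n \<and> U \<in> carrier_mat n n \<and> laurent_poly_mat U \<and>
           A = U * signature_mat p m * mat_star U"
proof -
  have "k = 0" by (rule hermitian_det_monomial_is_const[OF assms])
  then have "det A = fls_const c" using assms(4) by simp
  then have "signature_congruent n A"
    by (rule signature_congruent_of_const_det[OF assms(1-3)])
  then show ?thesis unfolding signature_congruent_def .
qed

end
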